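(* Let $\Gamma$ be a circle of radius $R$ with center $O$ in a plane $\Pi\subset\mathbb{R}^3$, let $l$ be the line through $O$ perpendicular to $\Pi$, and let $O_0\ne O_1$ be points of $l$ not in $\Pi$. Let $\mathcal D=\bigcup_{Y\in\Gamma}\operatorname{conv}\{O_0,O_1,Y\}$ be the dicone with vertices $O_0,O_1$, and for $i=0,1$ let $\mathcal U_{O_i}=\bigcup_{Y\in\Gamma}O_iY$ be the lateral conical surface with apex $O_i$. Let $f$ be a convex function defined on $\mathcal D$, and let $g(\mathbf x)=\frac{f(\mathbf x)}{\operatorname{dist}(\mathbf x,l)}$, where $\operatorname{dist}(\mathbf x,l)$ is the distance from $\mathbf x$ to $l$. Then $$\operatorname{Avg}(f,\mathcal D)\le\frac R4\left(\operatorname{Avg}(g,\mathcal U_{O_0})+\operatorname{Avg}(g,\mathcal U_{O_1})\right).$$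
   Context: $\operatorname{Avg}(f,\mathcal D)$ is the average of $f$ over $\mathcal D$ with respect to volume, and $\operatorname{Avg}(g,\mathcal U_{O_i})=\frac{1}{\operatorname{Area}(\mathcal U_{O_i})}\iint_{\mathcal U_{O_i}}g\,dS$ is the average with respect to surface area. *)

theory Defs
  imports "HOL-Analysis.Analysis"
begin

definition plane3 :: "real^3 \<Rightarrow> real^3 \<Rightarrow> real^3 \<Rightarrow> (real^3) set" where
  "plane3 C e1 e2 = {C + a *\<^sub>R e1 + b *\<^sub>R e2 | a b. True}"

definition axis3 :: "real^3 \<Rightarrow> real^3 \<Rightarrow> real^3 \<Rightarrow> (real^3) set" where
  "axis3 C e1 e2 = {C + t *\<^sub>R cross3 e1 e2 | t. True}"

definition circle3 :: "real^3 \<Rightarrow> real^3 \<Rightarrow> real^3 \<Rightarrow> real \<Rightarrow> (real^3) set" where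
  "circle3 C e1 e2 R = {Y \<in> plane3 C e1 e2. dist C Y = R}"

definition dicone :: "(real^3) set \<Rightarrow> real^3 \<Rightarrow> real^3 \<Rightarrow> (real^3) set" where
  "dicone \<Gamma> O0 O1 = (\<Union>Y\<in>\<Gamma>. convex hull {O0, O1, Y})"

definition circ_param :: "real^3 \<Rightarrow> real^3 \<Rightarrow> real^3 \<Rightarrow> real \<Rightarrow> real \<Rightarrow> real^3" where
  "circ_param C e1 e2 R \<theta> = C + (R * cos \<theta>) *\<^sub>R e1 + (R * sin \<theta>) *\<^sub>R e2"

definition cone_param :: "real^3 \<Rightarrow> real^3 \<Rightarrow> real^3 \<Rightarrow> real \<Rightarrow> real^3 \<Rightarrow> real \<times> real \<Rightarrow> real^3" where
  "cone_param C e1 e2 R A = (\<lambda>(t, \<theta>). A + t *\<^sub>R (circ_param C e1 e2 R \<theta> - A))"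

definition cone_dom :: "(real \<times> real) set" where
  "cone_dom = cbox (0, 0) (1, 2 * pi)"

definition surf_density :: "(real \<times> real \<Rightarrow> real^3) \<Rightarrow> (real^3 \<Rightarrow> real) \<Rightarrow> real \<times> real \<Rightarrow> real" where
  "surf_density \<phi> g = (\<lambda>(u, v). g (\<phi> (u, v)) *
      norm (cross3 (vector_derivative (\<lambda>s. \<phi> (s, v)) (at u))
                   (vector_derivative (\<lambda>s. \<phi> (u, s)) (at v))))"

definition surface_integrable :: "(real \<times> real \<Rightarrow> real^3) \<Rightarrow> (real \<times> real) set \<Rightarrow> (real^3 \<Rightarrow> real) \<Rightarrow> bool" where
  "surface_integrable \<phi> P g \<longleftrightarrow> surf_density \<phi> g integrable_on P"

definition surface_integral :: "(real \<times> real \<Rightarrow> real^3) \<Rightarrow> (real \<times> real) set \<Rightarrow> (real^3 \<Rightarrow> real) \<Rightarrow> real" where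
  "surface_integral \<phi> P g = integral P (surf_density \<phi> g)"

definition surface_avg :: "(real \<times> real \<Rightarrow> real^3) \<Rightarrow> (real \<times> real) set \<Rightarrow> (real^3 \<Rightarrow> real) \<Rightarrow> real" where
  "surface_avg \<phi> P g = surface_integral \<phi> P g / surface_integral \<phi> P (\<lambda>_. 1)"

definition vol_avg :: "(real^3) set \<Rightarrow> (real^3 \<Rightarrow> real) \<Rightarrow> real" where
  "vol_avg D f = integral D f / Henstock_Kurzweil_Integration.content D"

text \<open>Convexity of a function defined on a (possibly non-convex) set D: the convexity
  inequality along every segment contained in D. Coincides with convex_on when D is convex.\<close>
definition convex_fun_on :: "(real^3) set \<Rightarrow> (real^3 \<Rightarrow> real) \<Rightarrow> bool" where
  "convex_fun_on D f \<longleftrightarrow> (\<forall>x\<in>D. \<forall>y\<in>D. closed_segment x y \<subseteq> D \<longrightarrow>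
     (\<forall>t::real. 0 \<le> t \<and> t \<le> 1 \<longrightarrow> f ((1 - t) *\<^sub>R x + t *\<^sub>R y) \<le> (1 - t) * f x + t * f y))"

end

theory Submission
  imports Defs
begin

text \<open>Parametrize the dicone by (t, \<theta>, w) \<mapsto> (1 - w) P0(t, \<theta>) + w P1(t, \<theta>),
  where Pi(t, \<theta>) runs along a generatrix of the cone with vertex Oi = C + hi n, from Oi (t = 0)
  to the circle point of angle \<theta> (t = 1). The Jacobian is R^2 \<bar>h1 - h0\<bar> t (1 - t), so
  vol D = pi R^2 \<bar>h1 - h0\<bar> / 3. Convexity of f on the segment [P0, P1], integrated over w,
  bounds the integral of f over D by R^2 \<bar>h1 - h0\<bar> / 2 times the integral of t (1 - t)
  (f(P0) + f(P1)) over (t, \<theta>). Along each generatrix f(Pi) is convex in t, and since 1 - 6 t +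
  6 t^2 is orthogonal to the affine functions on [0, 1], 6 \<integral> t (1 - t) \<phi> \<le>
  \<integral> \<phi> for every convex \<phi>. On the other side, the area element of the cone with
  vertex Oi is t R sqrt (R^2 + hi^2) dt d\<theta>: its factor t R is exactly the distance to the axis
  that divides f in g, and the area of the cone is pi R sqrt (R^2 + hi^2). Being convex, f is
  continuous near an interior point and hence bounded below on D, which makes it absolutely
  integrable.\<close>

section \<open>Integration on products\<close>

lemma absolutely_integrable_twiddle:
  fixes F :: "'a::euclidean_space \<Rightarrow> real" and g :: "'b::euclidean_space \<Rightarrow> 'a"
  assumes hg: "\<And>x. h (g x) = x" and gh: "\<And>x. g (h x) = x"
    and contg: "\<And>x. continuous (at x) g"
    and gb: "\<And>u v. \<exists>w z. g ` cbox u v = cbox w z"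
    and hb: "\<And>u v. \<exists>w z. h ` cbox u v = cbox w z"
    and content: "\<And>u v. measure lborel (g ` cbox u v) = measure lborel (cbox u v)"
    and F: "F absolutely_integrable_on cbox a b"
  shows "(\<lambda>x. F (g x)) absolutely_integrable_on (h ` cbox a b)"
    "integral (h ` cbox a b) (\<lambda>x. F (g x)) = integral (cbox a b) F"
proof -
  have F_int: "F integrable_on cbox a b" "(\<lambda>x. norm (F x)) integrable_on cbox a b"
    using F unfolding absolutely_integrable_on_def by auto
  have "((\<lambda>x. F (g x)) has_integral (1 / 1) *\<^sub>R integral (cbox a b) F) (h ` cbox a b)"
    by (rule has_integral_twiddle[where r=1]) (use assms F_int in auto)
  moreover have "((\<lambda>x. norm (F (g x))) has_integral (1 / 1) *\<^sub>R integral (cbox a b) (\<lambda>x. norm (F x)))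
      (h ` cbox a b)"
    by (rule has_integral_twiddle[where r=1 and f="\<lambda>x. norm (F x)"]) (use assms F_int in auto)
  ultimately show "(\<lambda>x. F (g x)) absolutely_integrable_on (h ` cbox a b)"
    "integral (h ` cbox a b) (\<lambda>x. F (g x)) = integral (cbox a b) F"
    by (auto simp: absolutely_integrable_on_def integral_unique)
qed

lemma absolutely_integrable_on_swap:
  fixes F :: "'a::euclidean_space \<times> 'b::euclidean_space \<Rightarrow> real"
  assumes "F absolutely_integrable_on cbox (a, c) (b, d)"
  shows "(\<lambda>(y, x). F (x, y)) absolutely_integrable_on cbox (c, a) (d, b)"
    "integral (cbox (c, a) (d, b)) (\<lambda>(y, x). F (x, y)) = integral (cbox (a, c) (b, d)) F"
proof -
  have swap_F: "(\<lambda>(y, x). F (x, y)) = (\<lambda>p. F (prod.swap p))" by (auto simp: fun_eq_iff)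
  have content: "measure lborel (prod.swap ` cbox u v) = measure lborel (cbox u v)" for u v :: "'b \<times> 'a"
    by (metis content_Pair mult.commute old.prod.exhaust swap_cbox_Pair)
  have box: "\<exists>w z. prod.swap ` cbox u v = cbox w z"
    for u v :: "'x::euclidean_space \<times> 'y::euclidean_space"
    by (metis prod.exhaust swap_cbox_Pair)
  note twiddle = absolutely_integrable_twiddle[where h=prod.swap and g=prod.swap,
      OF _ _ _ box box content assms]
  show "(\<lambda>(y, x). F (x, y)) absolutely_integrable_on cbox (c, a) (d, b)"
    "integral (cbox (c, a) (d, b)) (\<lambda>(y, x). F (x, y)) = integral (cbox (a, c) (b, d)) F"
    using twiddle unfolding swap_F by (simp_all add: isCont_swap)
qed

lemma integrable_lebesgue_obtain_borel:
  fixes g :: "'a::euclidean_space \<Rightarrow> real"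
  assumes "integrable lebesgue g"
  obtains g' where "integrable lborel g'" "AE x in lborel. g x = g' x"
    "integral\<^sup>L lebesgue g = integral\<^sup>L lborel g'"
proof -
  have gm: "g \<in> borel_measurable lebesgue" using assms by (rule borel_measurable_integrable)
  obtain g' where g'm: "g' \<in> borel_measurable lborel" and ae: "AE x in lborel. g x = g' x"
    using completion_ex_borel_measurable_real[OF gm] by blast
  have aeL: "AE x in lebesgue. g x = g' x" using ae by (rule AE_completion)
  have g'mL: "g' \<in> borel_measurable lebesgue" using g'm by (rule measurable_completion)
  have "integrable lebesgue g'" by (rule integrable_cong_AE_imp[OF assms g'mL aeL])
  hence "integrable lborel g'" using integrable_completion[OF g'm] by simp
  moreover have "integral\<^sup>L lebesgue g = integral\<^sup>L lborel g'"
    using integral_cong_AE[OF gm g'mL aeL] integral_completion[OF g'm] by simp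
  ultimately show ?thesis using that ae by blast
qed

lemma integrable_lebesgue_AE_eq_lborel:
  fixes g :: "'a::euclidean_space \<Rightarrow> real"
  assumes g': "integrable lborel g'" and ae: "AE x in lborel. g x = g' x"
  shows "integrable lebesgue g" "integral\<^sup>L lebesgue g = integral\<^sup>L lborel g'"
proof -
  have g'm: "g' \<in> borel_measurable lborel" using g' by (rule borel_measurable_integrable)
  have g'mL: "g' \<in> borel_measurable lebesgue" using g'm by (rule measurable_completion)
  have aeL: "AE x in lebesgue. g' x = g x" using AE_completion[OF ae] by (auto elim: AE_mp)
  have gm: "g \<in> borel_measurable lebesgue" by (rule borel_measurable_AE[OF g'mL aeL])
  have "integrable lebesgue g'" using g' integrable_completion[OF g'm] by simp
  thus "integrable lebesgue g" by (rule integrable_cong_AE_imp[OF _ gm aeL])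
  show "integral\<^sup>L lebesgue g = integral\<^sup>L lborel g'"
    using integral_cong_AE[OF g'mL gm aeL] integral_completion[OF g'm] by simp
qed

lemma set_integral_lebesgue_eq_integral:
  fixes F :: "'a::euclidean_space \<Rightarrow> real"
  assumes "F absolutely_integrable_on S"
  shows "integral S F = (LINT x|lebesgue. indicator S x * F x)"
  using set_lebesgue_integral_eq_integral(2)[OF assms] unfolding set_lebesgue_integral_def by simp

text \<open>Fubini's theorem of the library lives on the Borel product measure; it is transferred to
  absolute integrability on A \<times> B through a Borel representative of the zero extension of F.\<close>
theorem Fubini_absolutely_integrable_on:
  fixes F :: "'a::euclidean_space \<times> 'b::euclidean_space \<Rightarrow> real"
  assumes F: "F absolutely_integrable_on A \<times> B"
  shows "AE x in lebesgue. x \<in> A \<longrightarrow> (\<lambda>y. F (x, y)) absolutely_integrable_on B"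
    "(\<lambda>x. integral B (\<lambda>y. F (x, y))) absolutely_integrable_on A"
    "integral (A \<times> B) F = integral A (\<lambda>x. integral B (\<lambda>y. F (x, y)))"
proof -
  define G where "G p = indicator (A \<times> B) p * F p" for p
  have "integrable lebesgue G" using F unfolding set_integrable_def G_def by simp
  then obtain G' where G': "integrable lborel G'" and GG': "AE p in lborel. G p = G' p"
      and int_G: "integral\<^sup>L lebesgue G = integral\<^sup>L lborel G'"
    by (rule integrable_lebesgue_obtain_borel)
  have G'_pair: "integrable (lborel \<Otimes>\<^sub>M lborel) G'" using G' by (simp add: lborel_prod)
  define H where "H x = (LINT y|lborel. G' (x, y))" for x
  have sections: "AE x in lborel. (x \<in> A \<longrightarrow> (\<lambda>y. F (x, y)) absolutely_integrable_on B) \<and>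
      indicator A x * integral B (\<lambda>y. F (x, y)) = H x"
    using lborel_pair.AE_pair[of "\<lambda>p. G p = G' p", unfolded lborel_prod, OF GG']
      lborel_pair.AE_integrable_fst'[OF G'_pair]
  proof eventually_elim
    case (elim x)
    have G_x: "(\<lambda>y. G (x, y)) = (\<lambda>y. indicator A x * (indicator B y * F (x, y)))"
      unfolding G_def by (simp add: fun_eq_iff indicator_times)
    note slice = integrable_lebesgue_AE_eq_lborel[OF elim(2) elim(1)]
    show ?case
    proof (cases "x \<in> A")
      case True
      have "(\<lambda>y. F (x, y)) absolutely_integrable_on B"
        using True slice(1) unfolding G_x set_integrable_def by simp
      then show ?thesis using True slice(2) set_integral_lebesgue_eq_integral
        unfolding G_x H_def by force
    qed (use slice(2) in \<open>simp add: G_x H_def\<close>)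
  qed
  have H: "integrable lborel H" unfolding H_def by (rule lborel_pair.integrable_fst'[OF G'_pair])
  note outer = integrable_lebesgue_AE_eq_lborel[OF H, of "\<lambda>x. indicator A x * integral B (\<lambda>y. F (x, y))"]
  have outer_ae: "AE x in lborel. indicator A x * integral B (\<lambda>y. F (x, y)) = H x"
    using sections by (auto elim: AE_mp)
  show "AE x in lebesgue. x \<in> A \<longrightarrow> (\<lambda>y. F (x, y)) absolutely_integrable_on B"
    using AE_completion[OF sections] by (auto elim: AE_mp)
  show int_outer: "(\<lambda>x. integral B (\<lambda>y. F (x, y))) absolutely_integrable_on A"
    using outer(1)[OF outer_ae] unfolding set_integrable_def by simp
  have "integral (A \<times> B) F = integral\<^sup>L lborel G'"
    using set_integral_lebesgue_eq_integral[OF F] int_G unfolding G_def by simp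
  also have "\<dots> = integral\<^sup>L lborel H"
    unfolding H_def using lborel_pair.integral_fst'[OF G'_pair] by (simp add: lborel_prod)
  also have "\<dots> = integral A (\<lambda>x. integral B (\<lambda>y. F (x, y)))"
    using outer(2)[OF outer_ae] set_integral_lebesgue_eq_integral[OF int_outer] by simp
  finally show "integral (A \<times> B) F = integral A (\<lambda>x. integral B (\<lambda>y. F (x, y)))" .
qed

lemma AE_lborel_pair_fst:
  assumes "AE x in lborel. P x"
  shows "AE p in (lborel :: 'a::euclidean_space measure) \<Otimes>\<^sub>M (lborel :: 'b::euclidean_space measure). P (fst p)"
proof -
  from assms obtain N where N: "{x \<in> space lborel. \<not> P x} \<subseteq> N" "emeasure lborel N = 0" "N \<in> sets lborel"
    by (rule AE_E)
  have "N \<times> UNIV \<in> null_sets (lborel \<Otimes>\<^sub>M (lborel :: 'b measure))"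
    using N lborel.emeasure_pair_measure_Times[of N lborel UNIV] by (auto simp: null_sets_def)
  then show ?thesis by (rule AE_I') (use N in auto)
qed

lemma AE_lborel_pair_snd:
  assumes "AE y in lborel. P y"
  shows "AE p in (lborel :: 'a::euclidean_space measure) \<Otimes>\<^sub>M (lborel :: 'b::euclidean_space measure). P (snd p)"
proof -
  from assms obtain N where N: "{y \<in> space lborel. \<not> P y} \<subseteq> N" "emeasure lborel N = 0" "N \<in> sets lborel"
    by (rule AE_E)
  have "UNIV \<times> N \<in> null_sets ((lborel :: 'a measure) \<Otimes>\<^sub>M lborel)"
    using N lborel.emeasure_pair_measure_Times[of UNIV lborel N] by (auto simp: null_sets_def)
  then show ?thesis by (rule AE_I') (use N in auto)
qed

lemma absolutely_integrable_on_Times_mult: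
  fixes a :: "'a::euclidean_space \<Rightarrow> real" and b :: "'b::euclidean_space \<Rightarrow> real"
  assumes a: "a absolutely_integrable_on A" and b: "b absolutely_integrable_on B"
  shows "(\<lambda>p. a (fst p) * b (snd p)) absolutely_integrable_on A \<times> B"
    "integral (A \<times> B) (\<lambda>p. a (fst p) * b (snd p)) = integral A a * integral B b"
proof -
  obtain a' where a': "integrable lborel a'" "AE x in lborel. indicator A x * a x = a' x"
    using a unfolding set_integrable_def by (auto elim: integrable_lebesgue_obtain_borel)
  obtain b' where b': "integrable lborel b'" "AE y in lborel. indicator B y * b y = b' y"
    using b unfolding set_integrable_def by (auto elim: integrable_lebesgue_obtain_borel)
  define P where "P p = a' (fst p) * b' (snd p)" for p
  have [measurable]: "a' \<in> borel_measurable lborel" "b' \<in> borel_measurable lborel"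
    using a'(1) b'(1) by (auto intro: borel_measurable_integrable)
  have "integrable (lborel \<Otimes>\<^sub>M lborel) P"
  proof (rule lborel_pair.Fubini_integrable)
    show "P \<in> borel_measurable (lborel \<Otimes>\<^sub>M lborel)" unfolding P_def by measurable
    have "(LBINT y. norm (P (x, y))) = norm (a' x) * (LBINT y. norm (b' y))" for x
      unfolding P_def by (simp add: abs_mult)
    then show "integrable lborel (\<lambda>x. LBINT y. norm (P (x, y)))"
      using a'(1) by (simp add: integrable_norm)
    show "AE x in lborel. integrable lborel (\<lambda>y. P (x, y))"
      unfolding P_def using b'(1) by simp
  qed
  moreover have "AE p in lborel \<Otimes>\<^sub>M lborel. indicator (A \<times> B) p * (a (fst p) * b (snd p)) = P p"
    using AE_lborel_pair_fst[OF a'(2)] AE_lborel_pair_snd[OF b'(2)]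
  proof eventually_elim
    case (elim p)
    then show ?case by (simp add: P_def indicator_times mult_ac flip: elim)
  qed
  ultimately have "integrable lebesgue (\<lambda>p. indicator (A \<times> B) p * (a (fst p) * b (snd p)))"
    unfolding lborel_prod by (rule integrable_lebesgue_AE_eq_lborel(1))
  then show ab: "(\<lambda>p. a (fst p) * b (snd p)) absolutely_integrable_on A \<times> B"
    unfolding set_integrable_def by simp
  have "integral (A \<times> B) (\<lambda>p. a (fst p) * b (snd p)) = integral A (\<lambda>x. a x * integral B b)"
    using Fubini_absolutely_integrable_on(3)[OF ab] by simp
  then show "integral (A \<times> B) (\<lambda>p. a (fst p) * b (snd p)) = integral A a * integral B b"
    by simp
qed

lemma absolutely_integrable_continuous_mult:
  fixes c :: "'a::euclidean_space \<Rightarrow> real"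
  assumes c: "continuous_on S c" and S: "compact S" and g: "g absolutely_integrable_on S"
  shows "(\<lambda>x. c x * g x) absolutely_integrable_on S"
proof (rule absolutely_integrable_bounded_measurable_product[OF bilinear_times _ _ _ g])
  have "S \<in> sets lebesgue" using lmeasurable_compact[OF S] by (simp add: fmeasurable_def)
  then show "c \<in> borel_measurable (lebesgue_on S)" "S \<in> sets lebesgue"
    using continuous_imp_measurable_on_sets_lebesgue[OF c] by auto
  show "bounded (c ` S)" by (rule compact_imp_bounded[OF compact_continuous_image[OF c S]])
qed

text \<open>The change of variables theorem is available for maps from real^3 to itself, Fubini's theorem
  for product types; vec3_of_triple connects the two settings.\<close>
definition vec3_of_triple :: "(real \<times> real) \<times> real \<Rightarrow> real^3" where
  "vec3_of_triple p = vector [fst (fst p), snd (fst p), snd p]"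

definition triple_of_vec3 :: "real^3 \<Rightarrow> (real \<times> real) \<times> real" where
  "triple_of_vec3 v = ((v$1, v$2), v$3)"

lemma vec3_of_triple_inverse [simp]: "vec3_of_triple (triple_of_vec3 v) = v"
  unfolding vec3_of_triple_def triple_of_vec3_def by (simp add: vec_eq_iff forall_3 vector_3)

lemma triple_of_vec3_inverse [simp]: "triple_of_vec3 (vec3_of_triple p) = p"
  unfolding vec3_of_triple_def triple_of_vec3_def by (simp add: vector_3)

lemma vec3_of_triple_image_cbox:
  "vec3_of_triple ` cbox u v = cbox (vec3_of_triple u) (vec3_of_triple v)"
proof -
  have "x \<in> vec3_of_triple ` cbox u v \<longleftrightarrow> triple_of_vec3 x \<in> cbox u v" for x
    by (metis image_iff triple_of_vec3_inverse vec3_of_triple_inverse)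
  moreover have "triple_of_vec3 x \<in> cbox u v \<longleftrightarrow> x \<in> cbox (vec3_of_triple u) (vec3_of_triple v)" for x
    by (cases u, cases v) (auto simp: triple_of_vec3_def vec3_of_triple_def mem_box_cart forall_3
        vector_3 cbox_interval less_eq_vec_def)
  ultimately show ?thesis by blast
qed

lemma triple_of_vec3_image_cbox:
  "triple_of_vec3 ` cbox u v = cbox (triple_of_vec3 u) (triple_of_vec3 v)"
proof -
  have "x \<in> triple_of_vec3 ` cbox u v \<longleftrightarrow> vec3_of_triple x \<in> cbox u v" for x
    by (metis image_iff triple_of_vec3_inverse vec3_of_triple_inverse)
  moreover have "vec3_of_triple x \<in> cbox u v \<longleftrightarrow> x \<in> cbox (triple_of_vec3 u) (triple_of_vec3 v)" for x
    by (cases x) (auto simp: triple_of_vec3_def vec3_of_triple_def mem_box_cart forall_3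
        vector_3 cbox_interval less_eq_vec_def)
  ultimately show ?thesis by blast
qed

lemma content_vec3_of_triple_image:
  "measure lborel (vec3_of_triple ` cbox u v) = measure lborel (cbox u v)"
proof -
  obtain a1 a2 a3 b1 b2 b3 where u: "u = ((a1, a2), a3)" and v: "v = ((b1, b2), b3)"
    by (metis prod.exhaust)
  have ex_3: "(\<exists>i::3. P i) \<longleftrightarrow> P 1 \<or> P 2 \<or> P 3" for P by (metis exhaust_3)
  have empty: "cbox (vec3_of_triple u) (vec3_of_triple v) = {} \<longleftrightarrow> b1 < a1 \<or> b2 < a2 \<or> b3 < a3"
    unfolding u v vec3_of_triple_def interval_eq_empty_cart ex_3 by (simp add: vector_3)
  have prod: "measure lborel (cbox u v)
      = measure lborel {a1..b1} * measure lborel {a2..b2} * measure lborel {a3..b3}"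
    unfolding u v content_Pair unfolding cbox_interval ..
  have prod_3: "prod f (UNIV::3 set) = f 1 * f 2 * f 3" for f :: "3 \<Rightarrow> real"
    unfolding UNIV_3 by (simp add: ac_simps)
  show ?thesis
  proof (cases "b1 < a1 \<or> b2 < a2 \<or> b3 < a3")
    case True
    then have "measure lborel (cbox u v) = 0" unfolding prod content_real_if by auto
    moreover have "measure lborel (vec3_of_triple ` cbox u v) = 0"
      unfolding vec3_of_triple_image_cbox content_cbox_if_cart using empty True by simp
    ultimately show ?thesis by simp
  next
    case False
    then have "measure lborel (cbox u v) = (b1 - a1) * (b2 - a2) * (b3 - a3)"
      unfolding prod content_real_if by auto
    moreover have "measure lborel (vec3_of_triple ` cbox u v) = (b1 - a1) * (b2 - a2) * (b3 - a3)"
      unfolding vec3_of_triple_image_cbox content_cbox_if_cart using empty False unfolding prod_3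
      by (simp add: u v vec3_of_triple_def vector_3)
    ultimately show ?thesis by simp
  qed
qed

lemma absolutely_integrable_vec3_of_triple:
  fixes F :: "real^3 \<Rightarrow> real"
  assumes "F absolutely_integrable_on cbox a b"
  shows "(\<lambda>p. F (vec3_of_triple p)) absolutely_integrable_on cbox (triple_of_vec3 a) (triple_of_vec3 b)"
    "integral (cbox (triple_of_vec3 a) (triple_of_vec3 b)) (\<lambda>p. F (vec3_of_triple p)) = integral (cbox a b) F"
proof -
  have linear: "vec3_of_triple = (\<lambda>p. fst (fst p) *\<^sub>R axis 1 1 + snd (fst p) *\<^sub>R axis 2 1 + snd p *\<^sub>R axis 3 1)"
    unfolding vec3_of_triple_def by (simp add: fun_eq_iff vec_eq_iff forall_3 vector_3 axis_def)
  have cont: "continuous (at x) vec3_of_triple" for x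
    unfolding linear by (intro continuous_intros)
  have boxes: "\<exists>w z. vec3_of_triple ` cbox u v = cbox w z" "\<exists>w z. triple_of_vec3 ` cbox u' v' = cbox w z"
    for u v u' v' using vec3_of_triple_image_cbox triple_of_vec3_image_cbox by blast+
  note twiddle = absolutely_integrable_twiddle[of triple_of_vec3 vec3_of_triple, OF _ _ cont boxes
      content_vec3_of_triple_image assms]
  show "(\<lambda>p. F (vec3_of_triple p)) absolutely_integrable_on cbox (triple_of_vec3 a) (triple_of_vec3 b)"
    "integral (cbox (triple_of_vec3 a) (triple_of_vec3 b)) (\<lambda>p. F (vec3_of_triple p)) = integral (cbox a b) F"
    using twiddle unfolding triple_of_vec3_image_cbox by simp_all
qed

lemma transpose_matrix_real3:
  "transpose (matrix (L :: real^3 \<Rightarrow> real^3)) = vector [L (axis 1 1), L (axis 2 1), L (axis 3 1)]"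
  unfolding transpose_def matrix_def by (simp add: vec_eq_iff forall_3 vector_3)

lemma cone_dom_eq: "cone_dom = {0..1} \<times> {0..2 * pi}"
  unfolding cone_dom_def cbox_Pair_eq by (simp add: cbox_interval)

lemma fst_pos_if_in_box_cone_dom:
  fixes p :: "real \<times> real"
  assumes "p \<in> box (0, 0) (1, 2 * pi)"
  shows "0 < fst p"
proof -
  have "(1::real, 0::real) \<in> Basis" by (simp add: Basis_prod_def)
  with assms have "(0::real, 0::real) \<bullet> (1, 0) < p \<bullet> (1::real, 0::real)" unfolding mem_box by blast
  then show ?thesis by (cases p) (simp add: inner_prod_def)
qed

lemma has_integral_cone_dom_fst:
  assumes "continuous_on {0..1} g"
  shows "((\<lambda>p. g (fst p)) has_integral 2 * pi * integral {0..1} g) cone_dom"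
proof -
  have cont: "continuous_on (cbox (0, 0) (1, 2 * pi)) (\<lambda>p. g (fst p))"
    by (rule continuous_on_compose2[OF assms continuous_on_fst[OF continuous_on_id]]) (auto simp: cbox_Pair_eq)
  then have "integral cone_dom (\<lambda>p. g (fst p))
      = integral (cbox 0 1) (\<lambda>t. integral (cbox 0 (2 * pi)) (\<lambda>\<theta>::real. g t))"
    unfolding cone_dom_def by (simp add: integral_prod_continuous)
  also have "\<dots> = 2 * pi * integral {0..1} g" by (simp add: mult.commute)
  finally show ?thesis using integrable_continuous[OF cont] unfolding cone_dom_def
    by (metis has_integral_integrable_integral)
qed

section \<open>Convex functions\<close>

lemma convex_on_chord_sign:
  fixes \<phi> :: "real \<Rightarrow> real"
  assumes conv: "convex_on I \<phi>" and I: "a \<in> I" "b \<in> I" "t \<in> I" and ab: "a < b"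
  shows "0 \<le> (\<phi> t - (\<phi> a + (\<phi> b - \<phi> a) / (b - a) * (t - a))) * ((t - a) * (t - b))"
proof -
  define s where "s = (\<phi> b - \<phi> a) / (b - a)"
  have s: "s = (\<phi> a - \<phi> b) / (a - b)" unfolding s_def by (metis minus_diff_eq minus_divide_divide)
  consider "t < a" | "t = a" | "a < t" "t < b" | "t = b" | "b < t" by linarith
  then have "0 \<le> (\<phi> t - (\<phi> a + s * (t - a))) * ((t - a) * (t - b))"
  proof cases
    case 1
    then have "(\<phi> t - \<phi> a) / (t - a) \<le> s"
      using convex_on_slope_le[OF conv I(3,2) 1 ab] unfolding s by linarith
    then have "s * (t - a) \<le> \<phi> t - \<phi> a" using 1 by (simp add: divide_le_eq mult.commute)
    moreover have "0 < (t - a) * (t - b)" using 1 ab by (simp add: mult_neg_neg)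
    ultimately show ?thesis by simp
  next
    case 3
    have "(\<phi> t - \<phi> a) / (t - a) \<le> s"
      using convex_on_slope_le(1)[OF conv I(1,2) 3] unfolding s by (metis minus_diff_eq minus_divide_divide)
    then have "\<phi> t - \<phi> a \<le> s * (t - a)" using 3 by (simp add: pos_divide_le_eq)
    moreover have "(t - a) * (t - b) < 0" using 3 by (simp add: mult_pos_neg)
    ultimately show ?thesis by (simp add: mult_nonpos_nonpos)
  next
    case 5
    have "s \<le> (\<phi> t - \<phi> a) / (t - a)"
      using convex_on_slope_le(1)[OF conv I(1,3) ab 5] unfolding s by (metis minus_diff_eq minus_divide_divide)
    then have "s * (t - a) \<le> \<phi> t - \<phi> a" using 5 ab by (simp add: pos_le_divide_eq)
    moreover have "0 < (t - a) * (t - b)" using 5 ab by simp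
    ultimately show ?thesis by simp
  qed simp_all
  then show ?thesis unfolding s_def .
qed

definition legendre2 :: "real \<Rightarrow> real" where
  "legendre2 t = 1 - 6 * t + 6 * t\<^sup>2"

lemma legendre2_orthogonal_affine:
  "(legendre2 has_integral 0) {0..1}" "((\<lambda>t. t * legendre2 t) has_integral 0) {0..1}"
proof -
  have "(legendre2 has_integral ((\<lambda>t. t - 3*t^2 + 2*t^3) 1 - (\<lambda>t. t - 3*t^2 + 2*t^3) 0)) {0..1}"
    unfolding legendre2_def
    by (rule fundamental_theorem_of_calculus)
       (auto intro!: derivative_eq_intros simp: has_real_derivative_iff_has_vector_derivative[symmetric]
         algebra_simps power2_eq_square)
  then show "(legendre2 has_integral 0) {0..1}" by simp
  have "((\<lambda>t. t * legendre2 t) has_integral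
      ((\<lambda>t. t^2/2 - 2*t^3 + 3/2*t^4) 1 - (\<lambda>t. t^2/2 - 2*t^3 + 3/2*t^4) 0)) {0..1}"
    unfolding legendre2_def
    by (rule fundamental_theorem_of_calculus)
       (auto intro!: derivative_eq_intros simp: has_real_derivative_iff_has_vector_derivative[symmetric]
         algebra_simps power2_eq_square power3_eq_cube)
  then show "((\<lambda>t. t * legendre2 t) has_integral 0) {0..1}" by simp
qed

lemma legendre2_factor:
  "legendre2 t = 6 * ((t - (3 - sqrt 3) / 6) * (t - (3 + sqrt 3) / 6))"
proof -
  have "sqrt 3 * sqrt 3 = (3::real)" by simp
  then show ?thesis unfolding legendre2_def by (simp add: field_simps power2_eq_square)
qed

text \<open>Since legendre2 is orthogonal to affine functions, subtracting the chord of \<phi> through the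
  two roots of legendre2 leaves an integrand that is pointwise nonnegative.\<close>
lemma convex_on_legendre2_integral_nonneg:
  fixes \<phi> :: "real \<Rightarrow> real"
  assumes conv: "convex_on {0..1} \<phi>" and int: "(\<lambda>t. legendre2 t * \<phi> t) integrable_on {0..1}"
  shows "0 \<le> integral {0..1} (\<lambda>t. legendre2 t * \<phi> t)"
proof -
  define t0 t1 :: real where "t0 = (3 - sqrt 3) / 6" and "t1 = (3 + sqrt 3) / 6"
  have "sqrt 3 < sqrt (3^2::real)" by (rule real_sqrt_less_mono) simp
  moreover have "0 < sqrt (3::real)" by simp
  ultimately have roots: "t0 \<in> {0..1}" "t1 \<in> {0..1}" "t0 < t1"
    unfolding t0_def t1_def atLeastAtMost_iff by (simp_all del: real_sqrt_gt_0_iff)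
  define d where "d = (\<phi> t1 - \<phi> t0) / (t1 - t0)"
  define chord where "chord t = (\<phi> t0 - d * t0) + d * t" for t
  have chord_orth: "((\<lambda>t. legendre2 t * chord t) has_integral 0) {0..1}"
    using has_integral_add[OF has_integral_mult_right has_integral_mult_right,
        OF legendre2_orthogonal_affine, of "\<phi> t0 - d * t0" d]
    unfolding chord_def by (simp add: algebra_simps)
  have "0 \<le> integral {0..1} (\<lambda>t. legendre2 t * (\<phi> t - chord t))"
  proof (rule integral_nonneg)
    show "(\<lambda>t. legendre2 t * (\<phi> t - chord t)) integrable_on {0..1}"
      using integrable_diff[OF int has_integral_integrable[OF chord_orth]] by (simp add: algebra_simps)
    show "0 \<le> legendre2 t * (\<phi> t - chord t)" if "t \<in> {0..1}" for t
    proof -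
      have "chord t = \<phi> t0 + d * (t - t0)"
        unfolding chord_def by (simp add: algebra_simps)
      then have "0 \<le> 6 * ((\<phi> t - chord t) * ((t - t0) * (t - t1)))"
        using convex_on_chord_sign[OF conv roots(1,2) that roots(3)] by (simp add: d_def)
      then show ?thesis unfolding legendre2_factor[folded t0_def t1_def] by (simp only: mult_ac)
    qed
  qed
  also have "\<dots> = integral {0..1} (\<lambda>t. legendre2 t * \<phi> t)"
    using integral_diff[OF int has_integral_integrable[OF chord_orth]] integral_unique[OF chord_orth]
    by (simp add: algebra_simps)
  finally show ?thesis .
qed

lemma has_integral_one_minus_ident: "((\<lambda>w::real. 1 - w) has_integral 1 / 2) {0..1}"
  using has_integral_diff[OF has_integral_const_real[of 1 0 1] ident_has_integral[of 0 1]] by simp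

lemma has_integral_ident_times_one_minus: "((\<lambda>t::real. t * (1 - t)) has_integral 1 / 6) {0..1}"
proof -
  have "((\<lambda>t::real. t * (1 - t)) has_integral ((\<lambda>t. t\<^sup>2/2 - t^3/3) 1 - (\<lambda>t. t\<^sup>2/2 - t^3/3) 0)) {0..1}"
    by (rule fundamental_theorem_of_calculus)
      (auto intro!: derivative_eq_intros simp: has_real_derivative_iff_has_vector_derivative[symmetric]
        algebra_simps power2_eq_square)
  then show ?thesis by simp
qed

lemma cone_dom_legendre2_integral_nonneg:
  fixes \<Phi> :: "real \<times> real \<Rightarrow> real"
  assumes int: "\<Phi> absolutely_integrable_on cone_dom"
    and conv: "\<And>\<theta>. convex_on {0..1} (\<lambda>t. \<Phi> (t, \<theta>))"
  shows "0 \<le> integral cone_dom (\<lambda>p. legendre2 (fst p) * \<Phi> p)"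
proof -
  have "continuous_on cone_dom (\<lambda>p. legendre2 (fst p))" unfolding legendre2_def by (intro continuous_intros)
  then have "(\<lambda>p. legendre2 (fst p) * \<Phi> p) absolutely_integrable_on cbox (0, 0) (1, 2 * pi)"
    using absolutely_integrable_continuous_mult[OF _ _ int] unfolding cone_dom_def by simp
  note swap = absolutely_integrable_on_swap[OF this]
  have box: "cbox (0::real, 0::real) (2 * pi, 1) = {0..2 * pi} \<times> {0..1}"
    unfolding cbox_Pair_eq by (simp add: cbox_interval)
  have "(\<lambda>p. legendre2 (snd p) * \<Phi> (snd p, fst p)) absolutely_integrable_on {0..2 * pi} \<times> {0..1}"
    using swap(1) unfolding box by (simp add: split_beta')
  note fubini = Fubini_absolutely_integrable_on[OF this]
  have "AE \<theta> in lebesgue. 0 \<le> indicator {0..2 * pi} \<theta> * integral {0..1} (\<lambda>t. legendre2 t * \<Phi> (t, \<theta>))"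
    using fubini(1)
  proof eventually_elim
    case (elim \<theta>)
    show ?case
    proof (cases "\<theta> \<in> {0..2 * pi}")
      case True
      then have "(\<lambda>t. legendre2 t * \<Phi> (t, \<theta>)) integrable_on {0..1}"
        using elim by (simp add: absolutely_integrable_on_def)
      then show ?thesis using True convex_on_legendre2_integral_nonneg[OF conv] by simp
    qed simp
  qed
  then have "0 \<le> (LINT \<theta>|lebesgue. indicator {0..2 * pi} \<theta> * integral {0..1} (\<lambda>t. legendre2 t * \<Phi> (t, \<theta>)))"
    by (rule integral_nonneg_AE)
  also have "\<dots> = integral {0..2 * pi} (\<lambda>\<theta>. integral {0..1} (\<lambda>t. legendre2 t * \<Phi> (t, \<theta>)))"
    using set_integral_lebesgue_eq_integral[OF fubini(2)] by simp
  also have "\<dots> = integral cone_dom (\<lambda>p. legendre2 (fst p) * \<Phi> p)"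
    using swap(2) fubini(3) unfolding box cone_dom_def by (simp add: split_beta')
  finally show ?thesis .
qed

lemma convex_fun_on_imp_convex_on:
  assumes "convex_fun_on D f" "convex S" "S \<subseteq> D"
  shows "convex_on S f"
proof (rule convex_onI[OF _ assms(2)])
  fix x y and t :: real assume "x \<in> S" "y \<in> S" "0 < t" "t < 1"
  moreover have "closed_segment x y \<subseteq> S" using \<open>x \<in> S\<close> \<open>y \<in> S\<close> assms(2) closed_segment_subset by blast
  ultimately show "f ((1 - t) *\<^sub>R x + t *\<^sub>R y) \<le> (1 - t) * f x + t * f y"
    using assms(1,3) unfolding convex_fun_on_def by (meson less_eq_real_def subsetD order.trans)
qed

text \<open>A convex function is bounded above near an interior point c; reflecting a far point x through c
  into that neighbourhood and applying convexity on the segment through c bounds f x from below.\<close>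
lemma convex_fun_on_bounded_below:
  assumes conv: "convex_fun_on D f" and ball: "ball c \<delta> \<subseteq> D" "0 < \<delta>" and bdd: "bounded D"
    and star: "\<And>x. x \<in> D \<Longrightarrow> closed_segment c x \<subseteq> D"
  obtains K where "\<And>x. x \<in> D \<Longrightarrow> K \<le> f x"
proof -
  have "continuous_on (ball c \<delta>) f"
    by (rule convex_on_continuous[OF open_ball convex_fun_on_imp_convex_on[OF conv convex_ball ball(1)]])
  then have "continuous_on (cball c (\<delta>/2)) f" by (rule continuous_on_subset) (use ball(2) in auto)
  then have "compact (f ` cball c (\<delta>/2))" by (rule compact_continuous_image) simp
  then obtain M where M: "\<And>y. y \<in> cball c (\<delta>/2) \<Longrightarrow> f y \<le> M"
    using compact_attains_sup[of "f ` cball c (\<delta>/2)"] ball(2) by fastforce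
  obtain B where B: "0 < B" "D \<subseteq> ball c B" using bounded_subset_ballD[OF bdd] by blast
  define s where "s = \<delta> / (2 * B)"
  have s: "0 < s" unfolding s_def using ball(2) B(1) by simp
  define u where "u = s / (1 + s)"
  have u: "0 < u" "u < 1" unfolding u_def using s by auto
  show ?thesis
  proof (rule that)
    fix x assume x: "x \<in> D"
    define q where "q = c - s *\<^sub>R (x - c)"
    have "norm (x - c) \<le> B" using B(2) x by (auto simp: dist_norm norm_minus_commute)
    then have "norm (q - c) \<le> s * B" unfolding q_def using s by (simp add: mult_left_mono)
    then have q: "q \<in> cball c (\<delta>/2)" unfolding s_def using B(1) by (simp add: dist_norm norm_minus_commute)
    then have q_D: "q \<in> D" using ball by auto
    have c_eq: "c = (1 - u) *\<^sub>R q + u *\<^sub>R x"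
    proof -
      have "q + s *\<^sub>R x = (1 + s) *\<^sub>R c" unfolding q_def by (simp add: algebra_simps)
      then have "c = (1 / (1 + s)) *\<^sub>R (q + s *\<^sub>R x)" using s by simp
      moreover have "1 - u = 1 / (1 + s)" unfolding u_def using s by (simp add: field_simps)
      ultimately show ?thesis by (simp add: u_def scaleR_add_right)
    qed
    have "closed_segment q x \<subseteq> D"
    proof -
      have "c \<in> closed_segment q x" unfolding closed_segment_def using c_eq u by auto
      moreover have "closed_segment q c \<subseteq> D"
        using closed_segment_subset[of q "ball c \<delta>" c] q ball by auto
      ultimately show ?thesis using Un_closed_segment star[OF x] by blast
    qed
    then have "f ((1 - u) *\<^sub>R q + u *\<^sub>R x) \<le> (1 - u) * f q + u * f x"
      using conv q_D x u unfolding convex_fun_on_def by simp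
    then have "f c \<le> (1 - u) * f q + u * f x" unfolding c_eq[symmetric] .
    also have "\<dots> \<le> (1 - u) * M + u * f x" using M[OF q] u by simp
    finally show "(f c - (1 - u) * M) / u \<le> f x" using u by (simp add: field_simps)
  qed
qed

section \<open>The dicone\<close>

lemma orthonormal_cross3:
  fixes e1 e2 :: "real^3"
  assumes "e1 \<bullet> e1 = 1" "e2 \<bullet> e2 = 1" "e1 \<bullet> e2 = 0"
  shows "cross3 e1 e2 \<bullet> cross3 e1 e2 = 1" "cross3 e1 e2 \<bullet> e1 = 0" "cross3 e1 e2 \<bullet> e2 = 0"
    "cross3 e1 (cross3 e1 e2) = - e2" "cross3 e2 (cross3 e1 e2) = e1"
  using assms by (simp_all add: dot_cross dot_cross_self inner_commute Lagrange)

lemma orthonormal_frame_expansion: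
  fixes e1 e2 x :: "real^3"
  assumes "e1 \<bullet> e1 = 1" "e2 \<bullet> e2 = 1" "e1 \<bullet> e2 = 0"
  shows "x = (x \<bullet> e1) *\<^sub>R e1 + (x \<bullet> e2) *\<^sub>R e2 + (x \<bullet> cross3 e1 e2) *\<^sub>R cross3 e1 e2"
proof -
  note frame = orthonormal_cross3[OF assms]
  define n where "n = cross3 e1 e2"
  define y where "y = x - ((x \<bullet> e1) *\<^sub>R e1 + (x \<bullet> e2) *\<^sub>R e2 + (x \<bullet> n) *\<^sub>R n)"
  have y: "y \<bullet> e1 = 0" "y \<bullet> e2 = 0" "y \<bullet> n = 0"
    using assms frame unfolding y_def n_def
    by (simp_all add: inner_diff_left inner_add_left inner_commute[of e2 e1]
        inner_commute[of "cross3 e1 e2" e1] inner_commute[of "cross3 e1 e2" e2])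
  have "cross3 y n = (y \<bullet> e2) *\<^sub>R e1 - (y \<bullet> e1) *\<^sub>R e2"
    unfolding n_def by (simp add: Lagrange)
  then have "(norm y)\<^sup>2 * (norm n)\<^sup>2 = 0" using y norm_cross[of y n] by simp
  moreover have "norm n = 1" using frame unfolding n_def by (simp add: norm_eq_sqrt_inner)
  ultimately show ?thesis unfolding y_def n_def by simp
qed

lemma polar_coordinates:
  obtains \<phi> where "a = sqrt (a\<^sup>2 + b\<^sup>2) * cos \<phi>" "b = sqrt (a\<^sup>2 + b\<^sup>2) * sin \<phi>"
proof (cases "a\<^sup>2 + b\<^sup>2 = 0")
  case True
  then show ?thesis using that[of 0] by simp
next
  case False
  define r where "r = sqrt (a\<^sup>2 + b\<^sup>2)"
  have r: "0 < r" using False unfolding r_def by (simp add: add_nonneg_nonneg sum_power2_gt_zero_iff)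
  have "(a/r)\<^sup>2 + (b/r)\<^sup>2 = 1"
    using False unfolding r_def by (simp add: power_divide add_divide_distrib[symmetric])
  then obtain t where "a/r = cos t" "b/r = sin t" by (rule sincos_total_2pi)
  then show ?thesis using that[of t] r unfolding r_def[symmetric] by (simp add: field_simps)
qed

lemma between_if_abs_midpoint_le:
  fixes a b H :: real
  assumes "\<bar>H - (a + b) / 2\<bar> \<le> \<bar>b - a\<bar> / 2"
  shows "min a b \<le> H" "H \<le> max a b"
  using assms by (cases "a \<le> b"; simp add: abs_le_iff field_simps)+

locale dicone_frame =
  fixes C e1 e2 :: "real^3" and R h0 h1 :: real
  assumes e1_unit: "e1 \<bullet> e1 = 1" and e2_unit: "e2 \<bullet> e2 = 1" and e1_e2: "e1 \<bullet> e2 = 0"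
    and R_pos: "0 < R" and heights_ne: "h0 \<noteq> h1"
begin

definition "nv = cross3 e1 e2"
definition "radial \<theta> = cos \<theta> *\<^sub>R e1 + sin \<theta> *\<^sub>R e2"
definition "tangential \<theta> = (- sin \<theta>) *\<^sub>R e1 + cos \<theta> *\<^sub>R e2"
definition "circle_point \<theta> = C + R *\<^sub>R radial \<theta>"
definition "apex h = C + h *\<^sub>R nv"

definition "cone_point h t \<theta> = C + ((1 - t) * h) *\<^sub>R nv + (t * R) *\<^sub>R radial \<theta>"
definition "height w = (1 - w) * h0 + w * h1"
definition "dicone_point t \<theta> w = (1 - w) *\<^sub>R cone_point h0 t \<theta> + w *\<^sub>R cone_point h1 t \<theta>"
definition "solid = dicone (circle3 C e1 e2 R) (apex h0) (apex h1)"
definition "slice_triangle \<theta> = convex hull {apex h0, apex h1, circle_point \<theta>}"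

lemmas frame_simps [simp] = e1_unit e2_unit e1_e2 e1_e2[unfolded inner_commute[of e1]]

lemma nv_simps [simp]: "nv \<bullet> nv = 1" "nv \<bullet> e1 = 0" "nv \<bullet> e2 = 0" "e1 \<bullet> nv = 0" "e2 \<bullet> nv = 0"
  using orthonormal_cross3[OF e1_unit e2_unit e1_e2] unfolding nv_def by (simp_all add: inner_commute)

lemma radial_simps [simp]:
  "radial \<theta> \<bullet> radial \<theta> = 1" "radial \<theta> \<bullet> nv = 0" "nv \<bullet> radial \<theta> = 0"
  "tangential \<theta> \<bullet> nv = 0" "nv \<bullet> tangential \<theta> = 0"
  unfolding radial_def tangential_def
  by (simp_all add: inner_add_left inner_add_right inner_diff_left inner_diff_right
      power2_eq_square[symmetric])

lemma cross3_frame: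
  "cross3 (radial \<theta>) (tangential \<theta>) = nv" "cross3 nv (tangential \<theta>) = - radial \<theta>"
  "cross3 (tangential \<theta>) nv = radial \<theta>"
proof -
  have e: "cross3 e1 nv = - e2" "cross3 e2 nv = e1" "cross3 e1 e2 = nv" "cross3 e2 e1 = - nv"
    "cross3 nv e1 = e2" "cross3 nv e2 = - e1"
    using orthonormal_cross3[OF e1_unit e2_unit e1_e2] cross_skew[of e2 e1] cross_skew[of "cross3 e1 e2" e1]
      cross_skew[of "cross3 e1 e2" e2] unfolding nv_def by simp_all
  have "cross3 (radial \<theta>) (tangential \<theta>) = (cos \<theta> * cos \<theta>) *\<^sub>R nv + (sin \<theta> * sin \<theta>) *\<^sub>R nv"
    unfolding radial_def tangential_def
    by (simp add: cross_add_left cross_add_right cross_mult_left cross_mult_right e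
        Cross3.right_diff_distrib Cross3.left_diff_distrib)
  also have "\<dots> = nv" by (simp add: scaleR_add_left[symmetric] power2_eq_square[symmetric])
  finally show "cross3 (radial \<theta>) (tangential \<theta>) = nv" .
  show "cross3 nv (tangential \<theta>) = - radial \<theta>" "cross3 (tangential \<theta>) nv = radial \<theta>"
    unfolding radial_def tangential_def
    by (simp_all add: cross_add_left cross_add_right cross_mult_left cross_mult_right e
        Cross3.right_diff_distrib Cross3.left_diff_distrib)
qed

lemma norm_nv_radial: "norm (a *\<^sub>R nv + b *\<^sub>R radial \<theta>) = sqrt (a\<^sup>2 + b\<^sup>2)"
  by (simp add: norm_eq_sqrt_inner inner_add_left inner_add_right power2_eq_square)

lemma norm_radial: "norm (radial \<theta>) = 1"
  by (simp add: norm_eq_sqrt_inner)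

lemma frame_cylindrical_coordinates:
  obtains z \<rho> \<phi> where "0 \<le> \<rho>" "x = C + z *\<^sub>R nv + \<rho> *\<^sub>R radial \<phi>"
proof -
  define a b where "a = (x - C) \<bullet> e1" and "b = (x - C) \<bullet> e2"
  have x: "x = C + a *\<^sub>R e1 + b *\<^sub>R e2 + ((x - C) \<bullet> nv) *\<^sub>R nv"
    using orthonormal_frame_expansion[OF e1_unit e2_unit e1_e2, of "x - C"]
    unfolding nv_def a_def b_def by (simp add: algebra_simps)
  obtain \<phi> where \<phi>: "a = sqrt (a\<^sup>2 + b\<^sup>2) * cos \<phi>" "b = sqrt (a\<^sup>2 + b\<^sup>2) * sin \<phi>"
    by (rule polar_coordinates)
  have "x = C + ((x - C) \<bullet> nv) *\<^sub>R nv + sqrt (a\<^sup>2 + b\<^sup>2) *\<^sub>R radial \<phi>"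
    unfolding radial_def by (subst x, subst \<phi>(1), subst \<phi>(2)) (simp add: algebra_simps)
  then show ?thesis by (rule that[rotated]) simp
qed

lemma dicone_point_eq: "dicone_point t \<theta> w = C + ((1 - t) * height w) *\<^sub>R nv + (t * R) *\<^sub>R radial \<theta>"
  unfolding dicone_point_def cone_point_def height_def by (simp add: algebra_simps)

lemma cone_point_affine:
  "cone_point h ((1 - l) * x + l * y) \<theta> = (1 - l) *\<^sub>R cone_point h x \<theta> + l *\<^sub>R cone_point h y \<theta>"
  unfolding cone_point_def by (simp add: algebra_simps)

lemma circle_point_in_circle3: "circle_point \<theta> \<in> circle3 C e1 e2 R"
proof -
  have "dist C (circle_point \<theta>) = R"
    using R_pos by (simp add: circle_point_def dist_norm norm_eq_sqrt_inner)
  moreover have "circle_point \<theta> = C + (R * cos \<theta>) *\<^sub>R e1 + (R * sin \<theta>) *\<^sub>R e2"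
    unfolding circle_point_def radial_def by (simp add: algebra_simps)
  ultimately show ?thesis unfolding circle3_def plane3_def by blast
qed

lemma circle3_obtain_angle:
  assumes "Y \<in> circle3 C e1 e2 R"
  obtains \<theta> where "0 \<le> \<theta>" "\<theta> < 2 * pi" "Y = circle_point \<theta>"
proof -
  from assms obtain a b where Y: "Y = C + a *\<^sub>R e1 + b *\<^sub>R e2" and d: "dist C Y = R"
    unfolding circle3_def plane3_def by auto
  have "Y - C = a *\<^sub>R e1 + b *\<^sub>R e2" unfolding Y by simp
  then have "norm (a *\<^sub>R e1 + b *\<^sub>R e2) = R" using d by (metis dist_norm norm_minus_commute)
  moreover have "(norm (a *\<^sub>R e1 + b *\<^sub>R e2))\<^sup>2 = a\<^sup>2 + b\<^sup>2"
    unfolding power2_norm_eq_inner by (simp add: inner_add_left inner_add_right power2_eq_square)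
  ultimately have "a\<^sup>2 + b\<^sup>2 = R\<^sup>2" by simp
  then have "(a/R)\<^sup>2 + (b/R)\<^sup>2 = 1" using R_pos by (simp add: power_divide add_divide_distrib[symmetric])
  then obtain t where t: "0 \<le> t" "t < 2 * pi" "a/R = cos t" "b/R = sin t" by (rule sincos_total_2pi)
  then have "a = R * cos t" "b = R * sin t" using R_pos by (simp_all add: field_simps)
  then have "Y = circle_point t" unfolding Y circle_point_def radial_def by (simp add: algebra_simps)
  with t that show ?thesis by blast
qed

lemma solid_eq_Union_slice_triangle: "solid = (\<Union>\<theta>. slice_triangle \<theta>)"
  unfolding solid_def dicone_def slice_triangle_def
  using circle_point_in_circle3 by (auto elim!: circle3_obtain_angle)

lemma slice_triangle_subset_solid: "slice_triangle \<theta> \<subseteq> solid"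
  using solid_eq_Union_slice_triangle by blast

lemma dicone_point_in_slice_triangle:
  assumes "0 \<le> t" "t \<le> 1" "0 \<le> w" "w \<le> 1"
  shows "dicone_point t \<theta> w \<in> slice_triangle \<theta>"
proof -
  have "dicone_point t \<theta> w = ((1-t)*(1-w)) *\<^sub>R apex h0 + ((1-t)*w) *\<^sub>R apex h1 + t *\<^sub>R circle_point \<theta>"
    unfolding dicone_point_def cone_point_def apex_def circle_point_def by (simp add: algebra_simps)
  moreover have "0 \<le> (1-t)*(1-w)" "0 \<le> (1-t)*w" using assms by auto
  moreover have "(1-t)*(1-w) + (1-t)*w + t = 1" by (simp add: algebra_simps)
  ultimately show ?thesis using assms unfolding slice_triangle_def convex_hull_3 by blast
qed

lemma slice_triangle_obtain_dicone_point:
  assumes "x \<in> slice_triangle \<theta>"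
  obtains t w where "0 \<le> t" "t \<le> 1" "0 \<le> w" "w \<le> 1" "x = dicone_point t \<theta> w"
proof -
  from assms obtain a b c where abc: "0 \<le> a" "0 \<le> b" "0 \<le> c" "a + b + c = 1"
    "x = a *\<^sub>R apex h0 + b *\<^sub>R apex h1 + c *\<^sub>R circle_point \<theta>"
    unfolding slice_triangle_def convex_hull_3 by auto
  define w where "w = (if a + b = 0 then 0 else b / (a + b))"
  have w: "0 \<le> w" "w \<le> 1" using abc unfolding w_def by (auto simp: field_simps)
  have ab: "a = (1 - c) * (1 - w) \<and> b = (1 - c) * w"
  proof (cases "a + b = 0")
    case True
    then show ?thesis using abc unfolding w_def by auto
  next
    case False
    then have ab: "1 - c = a + b" "(a + b) * w = b" using abc unfolding w_def by auto
    have "(1 - c) * (1 - w) = (a + b) - (a + b) * w" unfolding ab(1) by (simp add: algebra_simps)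
    then show ?thesis using ab by simp
  qed
  have "x = dicone_point c \<theta> w"
    unfolding abc(5) ab[THEN conjunct1] ab[THEN conjunct2]
    unfolding dicone_point_def cone_point_def apex_def circle_point_def by (simp add: algebra_simps)
  then show ?thesis using that w abc by auto
qed

lemma height_obtain:
  assumes "min h0 h1 \<le> H" "H \<le> max h0 h1"
  obtains w where "0 \<le> w" "w \<le> 1" "H = height w"
proof -
  define w where "w = (H - h0) / (h1 - h0)"
  have "w * (h1 - h0) = H - h0" using heights_ne unfolding w_def by simp
  then have "H = height w" unfolding height_def by (simp add: algebra_simps)
  moreover have "0 \<le> w" "w \<le> 1"
    using assms heights_ne unfolding w_def by (cases "h0 < h1"; auto simp: field_simps)+
  ultimately show ?thesis using that by blast
qed

lemma cone_point_in_slice_triangle: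
  assumes "0 \<le> t" "t \<le> 1" "h = h0 \<or> h = h1"
  shows "cone_point h t \<theta> \<in> slice_triangle \<theta>"
  using assms dicone_point_in_slice_triangle[of t 0 \<theta>] dicone_point_in_slice_triangle[of t 1 \<theta>]
  unfolding dicone_point_def by auto

definition "mid = apex ((h0 + h1) / 2)"

lemma mid_in_slice_triangle: "mid \<in> slice_triangle \<theta>"
proof -
  have "mid = dicone_point 0 \<theta> (1/2)" unfolding mid_def apex_def dicone_point_eq height_def by simp
  then show ?thesis using dicone_point_in_slice_triangle[of 0 "1/2" \<theta>] by simp
qed

lemma closed_segment_mid_subset_solid:
  assumes "x \<in> solid"
  shows "closed_segment mid x \<subseteq> solid"
proof -
  obtain \<theta> where "x \<in> slice_triangle \<theta>" using assms solid_eq_Union_slice_triangle by blast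
  then have "closed_segment mid x \<subseteq> slice_triangle \<theta>"
    using mid_in_slice_triangle unfolding slice_triangle_def
    by (intro closed_segment_subset_convex_hull) (auto simp: slice_triangle_def)
  then show ?thesis using slice_triangle_subset_solid by blast
qed

lemma cylinder_point_in_solid:
  assumes "0 \<le> t" "t \<le> 1" "min h0 h1 \<le> H" "H \<le> max h0 h1"
  shows "C + ((1 - t) * H) *\<^sub>R nv + (t * R) *\<^sub>R radial \<phi> \<in> solid"
proof -
  obtain w where w: "0 \<le> w" "w \<le> 1" "H = height w" using height_obtain assms(3,4) by blast
  then have "dicone_point t \<phi> w \<in> solid"
    using dicone_point_in_slice_triangle[OF assms(1,2) w(1,2)] slice_triangle_subset_solid by blast
  then show ?thesis unfolding dicone_point_eq w(3) .
qed

text \<open>A point at distance \<rho> < \<delta> from the axis and height z close to that of mid lies on the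
  slice at t = \<rho> / R \<le> 1/8, where the admissible heights z / (1 - t) still fill an interval of
  length at least 7/8 \<bar>h1 - h0\<bar> around the midpoint height.\<close>
lemma ball_mid_subset_solid:
  defines "\<delta> \<equiv> \<bar>h1 - h0\<bar> * R / (8 * (R + \<bar>h0\<bar> + \<bar>h1\<bar>))"
  shows "0 < \<delta>" "ball mid \<delta> \<subseteq> solid"
proof -
  define d Hm zc where "d = \<bar>h1 - h0\<bar>" and "Hm = \<bar>h0\<bar> + \<bar>h1\<bar>" and "zc = (h0 + h1) / 2"
  have d: "0 < d" "d \<le> Hm" and zc: "\<bar>zc\<bar> \<le> Hm" using heights_ne unfolding d_def Hm_def zc_def by auto
  define M where "M = R + Hm"
  have M: "0 < M" using R_pos d unfolding M_def by linarith
  have \<delta>: "\<delta> = d * R / (8 * M)" unfolding \<delta>_def d_def M_def Hm_def by (simp add: add.assoc)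
  show "0 < \<delta>" unfolding \<delta> using d R_pos M by simp
  show "ball mid \<delta> \<subseteq> solid"
  proof
    fix x assume "x \<in> ball mid \<delta>"
    then have x_mid: "norm (x - mid) < \<delta>" by (simp add: dist_norm norm_minus_commute)
    obtain z \<rho> \<phi> where \<rho>: "0 \<le> \<rho>" and x: "x = C + z *\<^sub>R nv + \<rho> *\<^sub>R radial \<phi>"
      by (rule frame_cylindrical_coordinates)
    have "x - mid = (z - zc) *\<^sub>R nv + \<rho> *\<^sub>R radial \<phi>"
      unfolding x mid_def apex_def zc_def by (simp add: algebra_simps)
    then have "norm (x - mid) = sqrt ((z - zc)\<^sup>2 + \<rho>\<^sup>2)" by (simp add: norm_nv_radial)
    moreover have "\<bar>z - zc\<bar> \<le> sqrt ((z - zc)\<^sup>2 + \<rho>\<^sup>2)" "\<rho> \<le> sqrt ((z - zc)\<^sup>2 + \<rho>\<^sup>2)"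
      by (auto intro!: real_le_rsqrt)
    ultimately have z: "\<bar>z - zc\<bar> < \<delta>" and "\<rho> < \<delta>" using x_mid by linarith+
    define t where "t = \<rho> / R"
    have t: "0 \<le> t" "t \<le> \<delta> / R" unfolding t_def using \<rho> \<open>\<rho> < \<delta>\<close> R_pos by (auto simp: divide_right_mono)
    have \<delta>R: "\<delta> / R = d / (8 * M)" unfolding \<delta> using R_pos by simp
    have "d \<le> M" using d R_pos unfolding M_def by linarith
    then have "\<delta> / R \<le> 1 / 8" unfolding \<delta>R using M by (simp add: field_simps)
    then have t8: "t \<le> 1 / 8" using t by linarith
    have "z - (1 - t) * zc = (z - zc) + t * zc" by (simp add: algebra_simps)
    then have "\<bar>z - (1 - t) * zc\<bar> \<le> \<bar>z - zc\<bar> + t * \<bar>zc\<bar>"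
      using abs_triangle_ineq[of "z - zc" "t * zc"] t by (simp add: abs_mult)
    also have "\<dots> \<le> \<delta> + \<delta> / R * Hm" using z t zc by (intro add_mono mult_mono) auto
    also have "\<dots> = \<delta> / R * M" unfolding M_def using R_pos by (simp add: field_simps)
    also have "\<dots> = d / 8" unfolding \<delta>R using M by simp
    finally have close: "\<bar>z - (1 - t) * zc\<bar> \<le> d / 8" .
    have rescale: "(z / (1 - t) - zc) * (1 - t) = z - (1 - t) * zc" using t8 by (simp add: field_simps)
    have "\<bar>z / (1 - t) - zc\<bar> * (7 / 8) \<le> \<bar>z / (1 - t) - zc\<bar> * (1 - t)"
      using t8 by (intro mult_left_mono) auto
    also have "\<dots> = \<bar>(z / (1 - t) - zc) * (1 - t)\<bar>" using t8 by (simp add: abs_mult)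
    also have "\<dots> = \<bar>z - (1 - t) * zc\<bar>" unfolding rescale ..
    finally have "\<bar>z / (1 - t) - zc\<bar> * (7 / 8) \<le> d / 8" using close by linarith
    moreover have "a * (7 / 8) \<le> d / 8 \<Longrightarrow> a \<le> d / 2" for a :: real using d by linarith
    ultimately have "\<bar>z / (1 - t) - zc\<bar> \<le> d / 2" by blast
    then have H: "min h0 h1 \<le> z / (1 - t)" "z / (1 - t) \<le> max h0 h1"
      using between_if_abs_midpoint_le[of "z / (1 - t)" h0 h1] unfolding d_def zc_def by auto
    have "(1 - t) * (z / (1 - t)) = z" using t8 by simp
    moreover have "t * R = \<rho>" using R_pos unfolding t_def by simp
    ultimately have "C + ((1 - t) * (z / (1 - t))) *\<^sub>R nv + (t * R) *\<^sub>R radial \<phi> = x" unfolding x by simp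
    moreover have "t \<le> 1" using t8 by simp
    ultimately show "x \<in> solid" using cylinder_point_in_solid[OF t(1) _ H] by metis
  qed
qed

section \<open>Volume of the dicone\<close>

definition "dicone_map v = dicone_point (v$1) (v$2) (v$3)"

definition "dicone_map' v = (\<lambda>d::real^3. d$1 *\<^sub>R (R *\<^sub>R radial (v$2) - height (v$3) *\<^sub>R nv)
    + d$2 *\<^sub>R ((v$1 * R) *\<^sub>R tangential (v$2)) + d$3 *\<^sub>R (((1 - v$1) * (h1 - h0)) *\<^sub>R nv))"

definition "param_dom = {v::real^3. 0 < v$1 \<and> v$1 < 1 \<and> 0 \<le> v$2 \<and> v$2 < 2 * pi \<and> 0 \<le> v$3 \<and> v$3 \<le> 1}"

definition "param_box = (cbox (vector [0, 0, 0]) (vector [1, 2 * pi, 1]) :: (real^3) set)"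

definition "jacobian_weight t = R\<^sup>2 * \<bar>h1 - h0\<bar> * (t * (1 - t))"

lemma dicone_map_has_derivative: "(dicone_map has_derivative dicone_map' v) (at v within S)"
  unfolding dicone_map_def[abs_def] dicone_map'_def dicone_point_eq height_def radial_def tangential_def
  by (auto intro!: derivative_eq_intros bounded_linear.has_derivative[OF bounded_linear_vec_nth]
      simp: algebra_simps fun_eq_iff)

lemma abs_det_dicone_map':
  assumes "0 \<le> v$1" "v$1 \<le> 1"
  shows "\<bar>det (matrix (dicone_map' v))\<bar> = jacobian_weight (v$1)"
proof -
  have columns: "dicone_map' v (axis 1 1) = R *\<^sub>R radial (v$2) - height (v$3) *\<^sub>R nv"
    "dicone_map' v (axis 2 1) = (v$1 * R) *\<^sub>R tangential (v$2)"
    "dicone_map' v (axis 3 1) = ((1 - v$1) * (h1 - h0)) *\<^sub>R nv"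
    unfolding dicone_map'_def by (simp_all add: axis_def)
  have "det (matrix (dicone_map' v)) = det (transpose (matrix (dicone_map' v)))"
    by (simp add: det_transpose)
  also have "\<dots> = R * (v$1 * R) * ((1 - v$1) * (h1 - h0))"
    unfolding transpose_matrix_real3 dot_cross_det[symmetric] columns
    by (simp add: cross_mult_left cross_mult_right cross3_frame inner_diff_left)
  finally show ?thesis
    using assms R_pos unfolding jacobian_weight_def by (simp add: abs_mult power2_eq_square)
qed

lemma radial_obtain_angle:
  obtains \<theta>' where "0 \<le> \<theta>'" "\<theta>' < 2 * pi" "radial \<theta>' = radial \<theta>"
proof -
  obtain t where "0 \<le> t" "t < 2 * pi" "cos \<theta> = cos t" "sin \<theta> = sin t"
    by (rule sincos_total_2pi[of "cos \<theta>" "sin \<theta>"]) auto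
  then show ?thesis using that[of t] unfolding radial_def by simp
qed

lemma radial_eq_imp_eq:
  assumes "radial a = radial b" "0 \<le> a" "a < 2 * pi" "0 \<le> b" "b < 2 * pi"
  shows "a = b"
proof -
  have "cos a = cos b" "sin a = sin b"
    using arg_cong[OF assms(1), of "\<lambda>v. v \<bullet> e1"] arg_cong[OF assms(1), of "\<lambda>v. v \<bullet> e2"]
    unfolding radial_def by (simp_all add: inner_add_left)
  then obtain n :: int where n: "a = b + 2 * pi * n" using sin_cos_eq_iff by metis
  then have "2 * pi * (-1) < 2 * pi * real_of_int n" "2 * pi * real_of_int n < 2 * pi * 1"
    using assms(2-5) by linarith+
  moreover have "0 < 2 * pi" by simp
  ultimately have "-1 < real_of_int n" "real_of_int n < 1"
    using mult_less_cancel_left_pos[of "2 * pi" "-1" "real_of_int n"]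
      mult_less_cancel_left_pos[of "2 * pi" "real_of_int n" 1] by blast+
  then show ?thesis using n by simp
qed

lemma inj_on_dicone_map: "inj_on dicone_map param_dom"
proof (rule inj_onI)
  fix x y assume x: "x \<in> param_dom" and y: "y \<in> param_dom" and eq: "dicone_map x = dicone_map y"
  define a where "a v = (1 - v$1) * height (v$3)" for v :: "real^3"
  have map: "(v$1 * R) *\<^sub>R radial (v$2) = dicone_map v - C - a v *\<^sub>R nv" for v
    unfolding dicone_map_def dicone_point_eq a_def by simp
  have "a v = (dicone_map v - C) \<bullet> nv" for v
    unfolding map[symmetric] dicone_map_def dicone_point_eq a_def by (simp add: inner_add_left)
  then have a: "a x = a y" using eq by metis
  then have rad: "(x$1 * R) *\<^sub>R radial (x$2) = (y$1 * R) *\<^sub>R radial (y$2)" unfolding map eq by simp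
  then have "\<bar>x$1 * R\<bar> = \<bar>y$1 * R\<bar>" by (metis norm_scaleR norm_radial mult_1_right)
  then have t: "x$1 = y$1" using x y R_pos unfolding param_dom_def by (simp add: abs_mult)
  then have "radial (x$2) = radial (y$2)" using rad x R_pos unfolding param_dom_def by simp
  then have \<theta>: "x$2 = y$2" using x y unfolding param_dom_def by (auto intro: radial_eq_imp_eq)
  have "height (x$3) = height (y$3)" using a t x unfolding a_def param_dom_def by simp
  then have "(x$3 - y$3) * (h1 - h0) = 0" unfolding height_def by (simp add: algebra_simps)
  then have w: "x$3 = y$3" using heights_ne by simp
  show "x = y" using t \<theta> w by (simp add: vec_eq_iff forall_3)
qed

lemma dicone_map_change_of_variables:
  fixes \<phi> :: "real^3 \<Rightarrow> real"
  shows "(\<lambda>v. \<bar>det (matrix (dicone_map' v))\<bar> * \<phi> (dicone_map v)) absolutely_integrable_on param_dom \<and>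
      integral param_dom (\<lambda>v. \<bar>det (matrix (dicone_map' v))\<bar> * \<phi> (dicone_map v)) = b
    \<longleftrightarrow> \<phi> absolutely_integrable_on (dicone_map ` param_dom) \<and> integral (dicone_map ` param_dom) \<phi> = b"
proof -
  have "param_dom \<in> sets borel" unfolding param_dom_def by measurable
  then have "(\<lambda>v. \<bar>det (matrix (dicone_map' v))\<bar> *\<^sub>R vec (\<phi> (dicone_map v)) :: real^1)
        absolutely_integrable_on param_dom \<and>
      integral param_dom (\<lambda>v. \<bar>det (matrix (dicone_map' v))\<bar> *\<^sub>R vec (\<phi> (dicone_map v))) = (vec b :: real^1)
    \<longleftrightarrow> (\<lambda>x. vec (\<phi> x) :: real^1) absolutely_integrable_on (dicone_map ` param_dom) \<and>
      integral (dicone_map ` param_dom) (\<lambda>x. vec (\<phi> x)) = (vec b :: real^1)"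
    by (intro has_absolute_integral_change_of_variables)
      (auto simp: dicone_map_has_derivative inj_on_dicone_map)
  then show ?thesis by (simp add: absolutely_integrable_on_1_iff integral_on_1_eq)
qed

lemma image_param_box_eq_solid: "dicone_map ` param_box = solid"
proof
  show "dicone_map ` param_box \<subseteq> solid"
  proof
    fix x assume "x \<in> dicone_map ` param_box"
    then obtain v where v: "v \<in> param_box" "x = dicone_map v" by blast
    then have "0 \<le> v$1" "v$1 \<le> 1" "0 \<le> v$3" "v$3 \<le> 1"
      unfolding param_box_def by (auto simp: mem_box_cart forall_3 vector_3)
    then show "x \<in> solid"
      using dicone_point_in_slice_triangle slice_triangle_subset_solid unfolding v(2) dicone_map_def by blast
  qed
  show "solid \<subseteq> dicone_map ` param_box"
  proof
    fix x assume "x \<in> solid"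
    then obtain \<theta> where "x \<in> slice_triangle \<theta>" using solid_eq_Union_slice_triangle by blast
    then obtain t w where tw: "0 \<le> t" "t \<le> 1" "0 \<le> w" "w \<le> 1" "x = dicone_point t \<theta> w"
      by (rule slice_triangle_obtain_dicone_point)
    obtain \<theta>' where \<theta>': "0 \<le> \<theta>'" "\<theta>' < 2 * pi" "radial \<theta>' = radial \<theta>" by (rule radial_obtain_angle)
    have "x = dicone_map ((vector [t, \<theta>', w] :: real^3))"
      unfolding tw(5) dicone_map_def dicone_point_eq by (simp add: vector_3 \<theta>'(3))
    moreover have "(vector [t, \<theta>', w] :: real^3) \<in> param_box"
      using tw \<theta>' unfolding param_box_def by (auto simp: mem_box_cart forall_3 vector_3)
    ultimately show "x \<in> dicone_map ` param_box" by blast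
  qed
qed

lemma compact_solid: "compact solid"
proof -
  have "continuous_on param_box dicone_map"
    unfolding continuous_on_eq_continuous_within
    using dicone_map_has_derivative by (blast intro: has_derivative_continuous)
  then show ?thesis unfolding image_param_box_eq_solid[symmetric] param_box_def
    by (intro compact_continuous_image) simp_all
qed

text \<open>The map misses only points with t = 0, which lie on the axis and hence in the plane
  e1 \<bullet> x = e1 \<bullet> C, and points with t = 1, which lie in the plane of the circle.\<close>
lemma solid_subset_image_param_dom:
  "solid \<subseteq> dicone_map ` param_dom \<union> ({x. e1 \<bullet> x = e1 \<bullet> C} \<union> {x. nv \<bullet> x = nv \<bullet> C})"
proof
  fix x assume "x \<in> solid"
  then obtain \<theta> where "x \<in> slice_triangle \<theta>" using solid_eq_Union_slice_triangle by blast
  then obtain t w where tw: "0 \<le> t" "t \<le> 1" "0 \<le> w" "w \<le> 1" "x = dicone_point t \<theta> w"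
    by (rule slice_triangle_obtain_dicone_point)
  obtain \<theta>' where \<theta>': "0 \<le> \<theta>'" "\<theta>' < 2 * pi" "radial \<theta>' = radial \<theta>" by (rule radial_obtain_angle)
  have x: "x = C + ((1 - t) * height w) *\<^sub>R nv + (t * R) *\<^sub>R radial \<theta>'"
    unfolding tw(5) dicone_point_eq \<theta>'(3) ..
  consider "t = 0" | "t = 1" | "0 < t" "t < 1" using tw by linarith
  then show "x \<in> dicone_map ` param_dom \<union> ({x. e1 \<bullet> x = e1 \<bullet> C} \<union> {x. nv \<bullet> x = nv \<bullet> C})"
  proof cases
    case 3
    then have "(vector [t, \<theta>', w] :: real^3) \<in> param_dom"
      using tw \<theta>' unfolding param_dom_def by (simp add: vector_3)
    moreover have "x = dicone_map ((vector [t, \<theta>', w] :: real^3))"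
      unfolding x dicone_map_def dicone_point_eq by (simp add: vector_3)
    ultimately show ?thesis by blast
  qed (simp_all add: x inner_add_right)
qed

lemma param_dom_subset_param_box: "param_dom \<subseteq> param_box"
  unfolding param_dom_def param_box_def by (auto simp: mem_box_cart forall_3 vector_3)

lemma image_param_dom_subset_solid: "dicone_map ` param_dom \<subseteq> solid"
  using image_param_box_eq_solid param_dom_subset_param_box by blast

lemma negligible_solid_param_dom_diff:
  "negligible (solid - dicone_map ` param_dom)" "negligible (dicone_map ` param_dom - solid)"
proof -
  have "e1 \<noteq> 0" "nv \<noteq> 0" using e1_unit nv_simps(1) by (metis inner_zero_left zero_neq_one)+
  then have "negligible ({x. e1 \<bullet> x = e1 \<bullet> C} \<union> {x. nv \<bullet> x = nv \<bullet> C})"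
    by (intro negligible_Un negligible_hyperplane) auto
  moreover have "solid - dicone_map ` param_dom \<subseteq> {x. e1 \<bullet> x = e1 \<bullet> C} \<union> {x. nv \<bullet> x = nv \<bullet> C}"
    using solid_subset_image_param_dom by blast
  ultimately show "negligible (solid - dicone_map ` param_dom)" by (rule negligible_subset)
  show "negligible (dicone_map ` param_dom - solid)" using image_param_dom_subset_solid by simp
qed

lemma negligible_param_box_diff: "negligible (param_box - param_dom)"
proof -
  have "(axis 1 1 :: real^3) \<noteq> 0" "(axis 2 1 :: real^3) \<noteq> 0" by (simp_all add: axis_eq_0_iff)
  then have "negligible ({v::real^3. axis 1 1 \<bullet> v = 0} \<union> {v. axis 1 1 \<bullet> v = 1} \<union> {v. axis 2 1 \<bullet> v = 2 * pi})"
    by (intro negligible_Un negligible_hyperplane) auto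
  moreover have "param_box - param_dom
      \<subseteq> {v. axis 1 1 \<bullet> v = 0} \<union> {v. axis 1 1 \<bullet> v = 1} \<union> {v. axis 2 1 \<bullet> v = 2 * pi}"
    unfolding param_box_def param_dom_def by (auto simp: mem_box_cart forall_3 vector_3 inner_axis')
  ultimately show ?thesis by (rule negligible_subset)
qed

lemma integral_solid_change_of_variables:
  fixes \<phi> :: "real^3 \<Rightarrow> real"
  assumes "\<phi> absolutely_integrable_on solid"
  shows "(\<lambda>v. jacobian_weight (v$1) * \<phi> (dicone_map v)) absolutely_integrable_on param_box"
    "integral solid \<phi> = integral param_box (\<lambda>v. jacobian_weight (v$1) * \<phi> (dicone_map v))"
proof -
  have spike_solid: "negligible {x \<in> solid - dicone_map ` param_dom. \<phi> x \<noteq> 0}"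
    "negligible {x \<in> dicone_map ` param_dom - solid. \<phi> x \<noteq> 0}"
    using negligible_solid_param_dom_diff by (auto intro: negligible_subset)
  have spike_box: "negligible {v \<in> param_dom - param_box. jacobian_weight (v$1) * \<phi> (dicone_map v) \<noteq> 0}"
    "negligible {v \<in> param_box - param_dom. jacobian_weight (v$1) * \<phi> (dicone_map v) \<noteq> 0}"
    using param_dom_subset_param_box negligible_param_box_diff by (auto intro: negligible_subset)
  have det: "\<bar>det (matrix (dicone_map' v))\<bar> * \<phi> (dicone_map v) = jacobian_weight (v$1) * \<phi> (dicone_map v)"
    if "v \<in> param_dom" for v
  proof -
    have "0 \<le> v$1" "v$1 \<le> 1" using that unfolding param_dom_def by auto
    then show ?thesis by (simp add: abs_det_dicone_map')
  qed
  have "\<phi> absolutely_integrable_on dicone_map ` param_dom"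
    using assms absolutely_integrable_spike_set_eq[OF spike_solid] by blast
  then have cov: "(\<lambda>v. \<bar>det (matrix (dicone_map' v))\<bar> * \<phi> (dicone_map v)) absolutely_integrable_on param_dom \<and>
      integral param_dom (\<lambda>v. \<bar>det (matrix (dicone_map' v))\<bar> * \<phi> (dicone_map v))
        = integral (dicone_map ` param_dom) \<phi>"
    using dicone_map_change_of_variables by blast
  have dom: "(\<lambda>v. jacobian_weight (v$1) * \<phi> (dicone_map v)) absolutely_integrable_on param_dom"
    by (rule absolutely_integrable_spike[OF cov[THEN conjunct1] negligible_empty]) (metis det DiffD1)
  have "integral param_dom (\<lambda>v. jacobian_weight (v$1) * \<phi> (dicone_map v)) = integral (dicone_map ` param_dom) \<phi>"
    using cov integral_cong[of param_dom, OF det] by simp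
  show "(\<lambda>v. jacobian_weight (v$1) * \<phi> (dicone_map v)) absolutely_integrable_on param_box"
    using dom absolutely_integrable_spike_set_eq[OF spike_box] by blast
  show "integral solid \<phi> = integral param_box (\<lambda>v. jacobian_weight (v$1) * \<phi> (dicone_map v))"
    using \<open>integral param_dom _ = _\<close> integral_spike_set[OF spike_box] integral_spike_set[OF spike_solid]
    by simp
qed

section \<open>The lateral cones\<close>

definition "slant h = sqrt (R\<^sup>2 + h\<^sup>2)"

lemma slant_pos: "0 < slant h"
  unfolding slant_def using R_pos by (simp add: add_pos_nonneg)

lemma cone_param_apex: "cone_param C e1 e2 R (apex h) = (\<lambda>(t, \<theta>). cone_point h t \<theta>)"
  unfolding cone_param_def circ_param_def cone_point_def radial_def apex_def
  by (rule ext) (auto simp: algebra_simps)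

lemma vector_derivative_cone_point:
  "vector_derivative (\<lambda>s. cone_point h s \<theta>) (at t) = R *\<^sub>R radial \<theta> - h *\<^sub>R nv"
  "vector_derivative (\<lambda>s. cone_point h t s) (at \<theta>) = (t * R) *\<^sub>R tangential \<theta>"
proof -
  show "vector_derivative (\<lambda>s. cone_point h s \<theta>) (at t) = R *\<^sub>R radial \<theta> - h *\<^sub>R nv"
    unfolding cone_point_def
    by (rule vector_derivative_at) (auto intro!: derivative_eq_intros simp: has_vector_derivative_def algebra_simps)
  show "vector_derivative (\<lambda>s. cone_point h t s) (at \<theta>) = (t * R) *\<^sub>R tangential \<theta>"
    unfolding cone_point_def radial_def tangential_def
    by (rule vector_derivative_at) (auto intro!: derivative_eq_intros simp: has_vector_derivative_def algebra_simps)
qed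

lemma norm_cross3_cone_derivatives:
  "norm (cross3 (R *\<^sub>R radial \<theta> - h *\<^sub>R nv) ((t * R) *\<^sub>R tangential \<theta>)) = \<bar>t\<bar> * R * slant h"
proof -
  have "cross3 (R *\<^sub>R radial \<theta> - h *\<^sub>R nv) ((t * R) *\<^sub>R tangential \<theta>) = (t * R) *\<^sub>R (R *\<^sub>R nv + h *\<^sub>R radial \<theta>)"
    by (simp add: Cross3.left_diff_distrib cross_mult_left cross_mult_right cross3_frame scaleR_add_right)
  then show ?thesis unfolding slant_def using R_pos by (simp add: norm_nv_radial abs_mult)
qed

lemma infdist_cone_point_axis3:
  assumes "0 \<le> t"
  shows "infdist (cone_point h t \<theta>) (axis3 C e1 e2) = t * R"
proof -
  have axis: "axis3 C e1 e2 = range apex" unfolding axis3_def apex_def nv_def by auto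
  have dist: "dist (cone_point h t \<theta>) (apex s) = sqrt (((1 - t) * h - s)\<^sup>2 + (t * R)\<^sup>2)" for s
  proof -
    have "cone_point h t \<theta> - apex s = ((1 - t) * h - s) *\<^sub>R nv + (t * R) *\<^sub>R radial \<theta>"
      unfolding cone_point_def apex_def by (simp add: algebra_simps)
    then show ?thesis by (simp add: dist_norm norm_nv_radial)
  qed
  have "infdist (cone_point h t \<theta>) (axis3 C e1 e2) \<le> dist (cone_point h t \<theta>) (apex ((1 - t) * h))"
    unfolding axis by (rule infdist_le) simp
  also have "\<dots> = t * R" unfolding dist using assms R_pos by simp
  finally have "infdist (cone_point h t \<theta>) (axis3 C e1 e2) \<le> t * R" .
  moreover have "t * R \<le> infdist (cone_point h t \<theta>) (axis3 C e1 e2)"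
    unfolding axis infdist_def
    by (auto intro!: cINF_greatest simp: dist real_le_rsqrt assms R_pos)
  ultimately show ?thesis by simp
qed

lemma surf_density_cone_param_apex:
  "surf_density (cone_param C e1 e2 R (apex h)) (\<lambda>_. 1) (t, \<theta>) = \<bar>t\<bar> * R * slant h"
  "0 < t \<Longrightarrow> surf_density (cone_param C e1 e2 R (apex h)) (\<lambda>x. g x / infdist x (axis3 C e1 e2)) (t, \<theta>)
      = slant h * g (cone_point h t \<theta>)"
  unfolding surf_density_def cone_param_apex
  using vector_derivative_cone_point norm_cross3_cone_derivatives infdist_cone_point_axis3[of t h \<theta>] R_pos
  by simp_all

lemma surface_area_cone_param_apex:
  "surface_integral (cone_param C e1 e2 R (apex h)) cone_dom (\<lambda>_. 1) = pi * R * slant h"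
proof -
  have "continuous_on {0..1} (\<lambda>t. R * slant h * t)" by (intro continuous_intros)
  from has_integral_cone_dom_fst[OF this]
  have "((\<lambda>p. R * slant h * fst p) has_integral pi * R * slant h) cone_dom" by (simp add: mult.assoc)
  then have "(surf_density (cone_param C e1 e2 R (apex h)) (\<lambda>_. 1) has_integral pi * R * slant h) cone_dom"
    unfolding cone_dom_def
  proof (rule has_integral_spike_interior)
    fix p :: "real \<times> real" assume "p \<in> box (0, 0) (1, 2 * pi)"
    then have "0 < fst p" by (rule fst_pos_if_in_box_cone_dom)
    then show "surf_density (cone_param C e1 e2 R (apex h)) (\<lambda>_. 1) p = R * slant h * fst p"
      by (cases p) (simp add: surf_density_cone_param_apex(1))
  qed
  then show ?thesis unfolding surface_integral_def by (rule integral_unique)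
qed

lemma surface_integral_cone_param_apex:
  assumes "surface_integrable (cone_param C e1 e2 R (apex h)) cone_dom (\<lambda>x. g x / infdist x (axis3 C e1 e2))"
  shows "(\<lambda>(t, \<theta>). g (cone_point h t \<theta>)) integrable_on cone_dom"
    "surface_integral (cone_param C e1 e2 R (apex h)) cone_dom (\<lambda>x. g x / infdist x (axis3 C e1 e2))
      = slant h * integral cone_dom (\<lambda>(t, \<theta>). g (cone_point h t \<theta>))"
proof -
  define d where "d = surf_density (cone_param C e1 e2 R (apex h)) (\<lambda>x. g x / infdist x (axis3 C e1 e2))"
  define G where "G = (\<lambda>(t, \<theta>). g (cone_point h t \<theta>))"
  obtain I where "(d has_integral I) cone_dom" using assms unfolding surface_integrable_def d_def by blast
  then have "((\<lambda>p. slant h * G p) has_integral I) cone_dom"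
    unfolding cone_dom_def
  proof (rule has_integral_spike_interior)
    fix p :: "real \<times> real" assume "p \<in> box (0, 0) (1, 2 * pi)"
    then have "0 < fst p" by (rule fst_pos_if_in_box_cone_dom)
    then show "slant h * G p = d p" unfolding d_def G_def by (cases p) (simp add: surf_density_cone_param_apex(2))
  qed
  moreover have "(\<lambda>p. (1 / slant h) * (slant h * G p)) = G" using slant_pos[of h] by (simp add: fun_eq_iff)
  ultimately have G: "(G has_integral I / slant h) cone_dom"
    using has_integral_mult_right[of "\<lambda>p. slant h * G p" I cone_dom "1 / slant h"] by simp
  then show "(\<lambda>(t, \<theta>). g (cone_point h t \<theta>)) integrable_on cone_dom" unfolding G_def by blast
  show "surface_integral (cone_param C e1 e2 R (apex h)) cone_dom (\<lambda>x. g x / infdist x (axis3 C e1 e2))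
      = slant h * integral cone_dom (\<lambda>(t, \<theta>). g (cone_point h t \<theta>))"
    unfolding surface_integral_def d_def[symmetric] G_def[symmetric]
    using integral_unique[OF G] integral_unique[OF \<open>(d has_integral I) cone_dom\<close>] slant_pos[of h] by simp
qed

lemma integral_solid_in_parameters:
  fixes \<phi> :: "real^3 \<Rightarrow> real"
  assumes "\<phi> absolutely_integrable_on solid"
  shows "(\<lambda>((t, \<theta>), w). jacobian_weight t * \<phi> (dicone_point t \<theta> w)) absolutely_integrable_on cone_dom \<times> {0..1}"
    "integral solid \<phi> = integral (cone_dom \<times> {0..1}) (\<lambda>((t, \<theta>), w). jacobian_weight t * \<phi> (dicone_point t \<theta> w))"
proof -
  note cov = integral_solid_change_of_variables[OF assms]
  have box: "cbox (triple_of_vec3 (vector [0, 0, 0])) (triple_of_vec3 (vector [1, 2 * pi, 1])) = cone_dom \<times> {0..1}"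
    unfolding triple_of_vec3_def cone_dom_def cbox_Pair_eq by (simp add: vector_3 cbox_interval)
  have "(\<lambda>p. jacobian_weight (vec3_of_triple p $ 1) * \<phi> (dicone_map (vec3_of_triple p)))
      = (\<lambda>((t, \<theta>), w). jacobian_weight t * \<phi> (dicone_point t \<theta> w))"
    by (auto simp: fun_eq_iff vec3_of_triple_def dicone_map_def vector_3)
  then show "(\<lambda>((t, \<theta>), w). jacobian_weight t * \<phi> (dicone_point t \<theta> w)) absolutely_integrable_on cone_dom \<times> {0..1}"
    "integral solid \<phi> = integral (cone_dom \<times> {0..1}) (\<lambda>((t, \<theta>), w). jacobian_weight t * \<phi> (dicone_point t \<theta> w))"
    using absolutely_integrable_vec3_of_triple[OF cov(1)[unfolded param_box_def]] cov(2)
    unfolding box param_box_def by simp_all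
qed

lemma measure_solid: "measure lborel solid = pi / 3 * (R\<^sup>2 * \<bar>h1 - h0\<bar>)"
proof -
  define k where "k = R\<^sup>2 * \<bar>h1 - h0\<bar>"
  have jw: "jacobian_weight = (\<lambda>t. k * (t * (1 - t)))" by (simp add: fun_eq_iff jacobian_weight_def k_def)
  have "integral {0..1} jacobian_weight = k * (1 / 6)"
    unfolding jw by (rule integral_unique[OF has_integral_mult_right[OF has_integral_ident_times_one_minus]])
  moreover have "continuous_on {0..1} jacobian_weight" unfolding jw by (intro continuous_intros)
  ultimately have "((\<lambda>p. jacobian_weight (fst p)) has_integral 2 * pi * (k * (1 / 6))) cone_dom"
    using has_integral_cone_dom_fst by metis
  moreover have "2 * pi * (k * (1 / 6)) = pi / 3 * k" by simp
  ultimately have jac: "((\<lambda>p. jacobian_weight (fst p)) has_integral pi / 3 * k) cone_dom" by simp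
  have "0 \<le> k" unfolding k_def by simp
  then have jac_abs: "(\<lambda>p. jacobian_weight (fst p)) absolutely_integrable_on cone_dom"
    using jac by (intro nonnegative_absolutely_integrable_1) (auto simp: jw cone_dom_eq)
  have one: "(\<lambda>_::real. 1::real) absolutely_integrable_on {0..1}"
    by (rule absolutely_integrable_continuous_real) simp
  have lmeasurable: "solid \<in> lmeasurable" by (rule lmeasurable_compact[OF compact_solid])
  have "measure lborel solid = measure lebesgue solid"
    using compact_solid by (intro measure_completion[symmetric]) (simp add: borel_compact)
  also have "\<dots> = integral solid (\<lambda>_. 1::real)" by (rule lmeasure_integral[OF lmeasurable])
  also have "\<dots> = integral (cone_dom \<times> {0..1::real}) (\<lambda>((t, \<theta>), w). jacobian_weight t)"
    using integral_solid_in_parameters(2)[OF absolutely_integrable_on_const[OF lmeasurable, of 1]] by simp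
  also have "(\<lambda>((t, \<theta>), w). jacobian_weight t) = (\<lambda>p. jacobian_weight (fst (fst p)) * 1)"
    by (simp add: fun_eq_iff split_beta)
  also have "integral (cone_dom \<times> {0..1::real}) \<dots> = pi / 3 * k"
    using absolutely_integrable_on_Times_mult(2)[OF jac_abs one] integral_unique[OF jac] by simp
  finally show ?thesis unfolding k_def .
qed

end

section \<open>Convex functions on the dicone\<close>

locale dicone_convex = dicone_frame +
  fixes f :: "real^3 \<Rightarrow> real"
  assumes convex: "convex_fun_on solid f"
begin

definition "cone_trace h = (\<lambda>(t, \<theta>). f (cone_point h t \<theta>))"

lemma convex_on_slice_triangle:
  assumes "x \<in> slice_triangle \<theta>" "y \<in> slice_triangle \<theta>" "0 \<le> l" "l \<le> 1"
  shows "f ((1 - l) *\<^sub>R x + l *\<^sub>R y) \<le> (1 - l) * f x + l * f y"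
proof -
  have "closed_segment x y \<subseteq> slice_triangle \<theta>" unfolding slice_triangle_def
    by (rule closed_segment_subset_convex_hull) (use assms in \<open>auto simp: slice_triangle_def\<close>)
  moreover have "x \<in> solid" "y \<in> solid" using assms(1,2) slice_triangle_subset_solid by auto
  ultimately show ?thesis
    using convex assms(3,4) slice_triangle_subset_solid unfolding convex_fun_on_def by blast
qed

lemma solid_bounded_below:
  obtains K where "\<And>x. x \<in> solid \<Longrightarrow> K \<le> f x"
  using convex_fun_on_bounded_below[OF convex ball_mid_subset_solid(2,1)
      compact_imp_bounded[OF compact_solid] closed_segment_mid_subset_solid] by blast

lemma absolutely_integrable_cone_trace:
  assumes "cone_trace h integrable_on cone_dom" "h = h0 \<or> h = h1"
  shows "cone_trace h absolutely_integrable_on cone_dom"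
proof -
  obtain K where K: "\<And>x. x \<in> solid \<Longrightarrow> K \<le> f x"
    using solid_bounded_below by blast
  have "K \<le> cone_trace h p" if "p \<in> cone_dom" for p
  proof -
    obtain t \<theta> where p: "p = (t, \<theta>)" by fastforce
    then have "0 \<le> t" "t \<le> 1" using that unfolding cone_dom_eq by auto
    then have "cone_point h t \<theta> \<in> solid"
      using cone_point_in_slice_triangle[OF _ _ assms(2)] slice_triangle_subset_solid by blast
    then show ?thesis unfolding p cone_trace_def using K by simp
  qed
  then show ?thesis
    using absolutely_integrable_absolutely_integrable_lbound[OF assms(1)
        absolutely_integrable_on_const[OF lmeasurable_compact]] unfolding cone_dom_def by auto
qed

text \<open>Along each generatrix the trace of f is convex, so the weight legendre2 = 1 - 6 t (1 - t)
  integrates it to something nonnegative.\<close>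
lemma weighted_integral_cone_trace_le:
  assumes int: "cone_trace h absolutely_integrable_on cone_dom" and h: "h = h0 \<or> h = h1"
  shows "6 * integral cone_dom (\<lambda>p. fst p * (1 - fst p) * cone_trace h p) \<le> integral cone_dom (cone_trace h)"
proof -
  have "convex_on {0..1} (\<lambda>t. cone_trace h (t, \<theta>))" for \<theta>
  proof (rule convex_onI)
    fix x y l :: real assume "x \<in> {0..1}" "y \<in> {0..1}" "0 < l" "l < 1"
    then have "cone_point h x \<theta> \<in> slice_triangle \<theta>" "cone_point h y \<theta> \<in> slice_triangle \<theta>"
      using cone_point_in_slice_triangle[OF _ _ h] by auto
    then have "f ((1 - l) *\<^sub>R cone_point h x \<theta> + l *\<^sub>R cone_point h y \<theta>)
        \<le> (1 - l) * f (cone_point h x \<theta>) + l * f (cone_point h y \<theta>)"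
      using \<open>0 < l\<close> \<open>l < 1\<close> by (intro convex_on_slice_triangle) auto
    then show "cone_trace h ((1 - l) *\<^sub>R x + l *\<^sub>R y, \<theta>) \<le> (1 - l) * cone_trace h (x, \<theta>) + l * cone_trace h (y, \<theta>)"
      unfolding cone_trace_def by (simp add: cone_point_affine)
  qed simp
  then have "0 \<le> integral cone_dom (\<lambda>p. legendre2 (fst p) * cone_trace h p)"
    by (rule cone_dom_legendre2_integral_nonneg[OF int])
  moreover have "(\<lambda>p. fst p * (1 - fst p) * cone_trace h p) absolutely_integrable_on cone_dom"
    by (rule absolutely_integrable_continuous_mult[OF _ _ int]) (auto intro!: continuous_intros simp: cone_dom_def)
  moreover have "(\<lambda>p. legendre2 (fst p) * cone_trace h p)
      = (\<lambda>p. cone_trace h p - 6 * (fst p * (1 - fst p) * cone_trace h p))"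
    by (simp add: fun_eq_iff legendre2_def algebra_simps power2_eq_square)
  ultimately show ?thesis
    using int by (simp add: integral_diff absolutely_integrable_on_def integrable_on_cmult_left)
qed

text \<open>The dicone point of parameter w lies on the segment joining the corresponding points of the two
  lateral cones, so convexity bounds f there by the affine interpolation of the two traces.\<close>
lemma integral_solid_le_cone_traces:
  assumes f: "f absolutely_integrable_on solid"
    and int: "cone_trace h0 absolutely_integrable_on cone_dom" "cone_trace h1 absolutely_integrable_on cone_dom"
  shows "integral solid f \<le> (integral cone_dom (\<lambda>p. jacobian_weight (fst p) * cone_trace h0 p)
      + integral cone_dom (\<lambda>p. jacobian_weight (fst p) * cone_trace h1 p)) / 2"
proof -
  define a where "a h p = jacobian_weight (fst p) * cone_trace h p" for h p
  have a: "a h absolutely_integrable_on cone_dom" if "cone_trace h absolutely_integrable_on cone_dom" for h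
    unfolding a_def jacobian_weight_def
    by (rule absolutely_integrable_continuous_mult[OF _ _ that]) (auto intro!: continuous_intros simp: cone_dom_def)
  have lin: "(\<lambda>w::real. 1 - w) absolutely_integrable_on {0..1}" "(\<lambda>w::real. w) absolutely_integrable_on {0..1}"
    by (auto intro!: absolutely_integrable_continuous_real continuous_intros)
  note A0 = absolutely_integrable_on_Times_mult[OF a[OF int(1)] lin(1)]
  note A1 = absolutely_integrable_on_Times_mult[OF a[OF int(2)] lin(2)]
  note W = integral_solid_in_parameters[OF f]
  have "integral solid f \<le> integral (cone_dom \<times> {0..1}) (\<lambda>p. a h0 (fst p) * (1 - snd p) + a h1 (fst p) * snd p)"
    unfolding W(2)
  proof (rule integral_le)
    show "(\<lambda>((t, \<theta>), w). jacobian_weight t * f (dicone_point t \<theta> w)) integrable_on cone_dom \<times> {0..1}"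
      using W(1) by (simp add: absolutely_integrable_on_def)
    show "(\<lambda>p. a h0 (fst p) * (1 - snd p) + a h1 (fst p) * snd p) integrable_on cone_dom \<times> {0..1}"
      using set_integral_add(1)[OF A0(1) A1(1)] by (simp add: absolutely_integrable_on_def)
    fix p :: "(real \<times> real) \<times> real" assume p: "p \<in> cone_dom \<times> {0..1}"
    obtain t \<theta> w where p_eq: "p = ((t, \<theta>), w)" by (metis prod.exhaust)
    have tw: "0 \<le> t" "t \<le> 1" "0 \<le> w" "w \<le> 1" using p unfolding p_eq cone_dom_eq by auto
    have "cone_point h0 t \<theta> \<in> slice_triangle \<theta>" "cone_point h1 t \<theta> \<in> slice_triangle \<theta>"
      using cone_point_in_slice_triangle tw by auto
    then have "f (dicone_point t \<theta> w) \<le> (1 - w) * f (cone_point h0 t \<theta>) + w * f (cone_point h1 t \<theta>)"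
      unfolding dicone_point_def using tw by (intro convex_on_slice_triangle) auto
    moreover have "0 \<le> jacobian_weight t" unfolding jacobian_weight_def using tw by simp
    ultimately have "jacobian_weight t * f (dicone_point t \<theta> w)
        \<le> jacobian_weight t * ((1 - w) * f (cone_point h0 t \<theta>) + w * f (cone_point h1 t \<theta>))"
      by (rule mult_left_mono)
    then show "(\<lambda>((t, \<theta>), w). jacobian_weight t * f (dicone_point t \<theta> w)) p
        \<le> a h0 (fst p) * (1 - snd p) + a h1 (fst p) * snd p"
      unfolding p_eq a_def cone_trace_def by (simp add: algebra_simps)
  qed
  also have "\<dots> = integral cone_dom (a h0) * (1 / 2) + integral cone_dom (a h1) * (1 / 2)"
    using integral_add[OF A0(1)[unfolded absolutely_integrable_on_def, THEN conjunct1]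
        A1(1)[unfolded absolutely_integrable_on_def, THEN conjunct1]] A0(2) A1(2)
      integral_unique[OF has_integral_one_minus_ident] integral_unique[OF ident_has_integral[of 0 1]]
    by simp
  finally show ?thesis unfolding a_def by simp
qed

lemma vol_avg_solid_le:
  assumes f: "f integrable_on solid"
    and int: "cone_trace h0 integrable_on cone_dom" "cone_trace h1 integrable_on cone_dom"
  shows "vol_avg solid f \<le> (integral cone_dom (cone_trace h0) + integral cone_dom (cone_trace h1)) / (4 * pi)"
proof -
  define k where "k = R\<^sup>2 * \<bar>h1 - h0\<bar>"
  have k: "0 < k" unfolding k_def using R_pos heights_ne by simp
  obtain K where "\<And>x. x \<in> solid \<Longrightarrow> K \<le> f x"
    using solid_bounded_below by blast
  then have "f absolutely_integrable_on solid"
    using absolutely_integrable_absolutely_integrable_lbound[OF f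
        absolutely_integrable_on_const[OF lmeasurable_compact[OF compact_solid]]] by blast
  have trace: "cone_trace h0 absolutely_integrable_on cone_dom" "cone_trace h1 absolutely_integrable_on cone_dom"
    using absolutely_integrable_cone_trace int by auto
  have weighted: "integral cone_dom (\<lambda>p. jacobian_weight (fst p) * cone_trace h p)
      \<le> k / 6 * integral cone_dom (cone_trace h)"
    if "cone_trace h absolutely_integrable_on cone_dom" "h = h0 \<or> h = h1" for h
  proof -
    have "integral cone_dom (\<lambda>p. jacobian_weight (fst p) * cone_trace h p)
        = k * integral cone_dom (\<lambda>p. fst p * (1 - fst p) * cone_trace h p)"
      unfolding jacobian_weight_def k_def by (simp add: mult.assoc flip: integral_mult_right)
    then show ?thesis using weighted_integral_cone_trace_le[OF that] k by (simp add: mult_left_mono)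
  qed
  have "integral solid f
      \<le> (k / 6 * integral cone_dom (cone_trace h0) + k / 6 * integral cone_dom (cone_trace h1)) / 2"
    using integral_solid_le_cone_traces[OF \<open>f absolutely_integrable_on solid\<close> trace]
      weighted[OF trace(1)] weighted[OF trace(2)] by simp
  then have "vol_avg solid f
      \<le> (k / 6 * integral cone_dom (cone_trace h0) + k / 6 * integral cone_dom (cone_trace h1)) / 2 / (pi / 3 * k)"
    unfolding vol_avg_def measure_solid k_def[symmetric] by (rule divide_right_mono) (use k in simp)
  also have "\<dots> = (integral cone_dom (cone_trace h0) + integral cone_dom (cone_trace h1)) / (4 * pi)"
    using k by (simp add: field_simps)
  finally show ?thesis .
qed

lemma surface_avg_cone_param_apex:
  assumes "surface_integrable (cone_param C e1 e2 R (apex h)) cone_dom (\<lambda>x. f x / infdist x (axis3 C e1 e2))"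
  shows "cone_trace h integrable_on cone_dom"
    "surface_avg (cone_param C e1 e2 R (apex h)) cone_dom (\<lambda>x. f x / infdist x (axis3 C e1 e2))
      = integral cone_dom (cone_trace h) / (pi * R)"
proof -
  note surface = surface_integral_cone_param_apex[OF assms, folded cone_trace_def]
  show "cone_trace h integrable_on cone_dom" by (rule surface(1))
  show "surface_avg (cone_param C e1 e2 R (apex h)) cone_dom (\<lambda>x. f x / infdist x (axis3 C e1 e2))
      = integral cone_dom (cone_trace h) / (pi * R)"
    unfolding surface_avg_def surface(2) surface_area_cone_param_apex using slant_pos[of h] by simp
qed

theorem vol_avg_solid_le_surface_avg:
  assumes "f integrable_on solid"
    and "\<And>h. h \<in> {h0, h1} \<Longrightarrow>
      surface_integrable (cone_param C e1 e2 R (apex h)) cone_dom (\<lambda>x. f x / infdist x (axis3 C e1 e2))"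
  shows "vol_avg solid f
    \<le> R / 4 * (surface_avg (cone_param C e1 e2 R (apex h0)) cone_dom (\<lambda>x. f x / infdist x (axis3 C e1 e2))
             + surface_avg (cone_param C e1 e2 R (apex h1)) cone_dom (\<lambda>x. f x / infdist x (axis3 C e1 e2)))"
proof -
  note avg0 = surface_avg_cone_param_apex[OF assms(2)[OF insertI1]]
  note avg1 = surface_avg_cone_param_apex[OF assms(2)[OF insertI2[OF singletonI]]]
  have "vol_avg solid f \<le> (integral cone_dom (cone_trace h0) + integral cone_dom (cone_trace h1)) / (4 * pi)"
    using vol_avg_solid_le[OF assms(1)] avg0(1) avg1(1) by simp
  also have "\<dots> = R / 4 * (integral cone_dom (cone_trace h0) / (pi * R) + integral cone_dom (cone_trace h1) / (pi * R))"
    using R_pos by (simp add: field_simps)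
  finally show ?thesis unfolding avg0(2) avg1(2) .
qed

end

theorem theorem7p4:
  fixes C e1 e2 O0 O1 :: "real^3" and R :: real and f :: "real^3 \<Rightarrow> real"
  assumes orth: "e1 \<bullet> e1 = 1" "e2 \<bullet> e2 = 1" "e1 \<bullet> e2 = 0"
    and R: "R > 0"
    and O0: "O0 \<in> axis3 C e1 e2" "O0 \<notin> plane3 C e1 e2"
    and O1: "O1 \<in> axis3 C e1 e2" "O1 \<notin> plane3 C e1 e2"
    and neq: "O0 \<noteq> O1"
    and conv: "convex_fun_on (dicone (circle3 C e1 e2 R) O0 O1) f"
    and intf: "f integrable_on dicone (circle3 C e1 e2 R) O0 O1"
    and intg: "\<And>A. A \<in> {O0, O1} \<Longrightarrow> surface_integrable (cone_param C e1 e2 R A) cone_dom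
                  (\<lambda>x. f x / infdist x (axis3 C e1 e2))"
  shows "vol_avg (dicone (circle3 C e1 e2 R) O0 O1) f
         \<le> R / 4 * (surface_avg (cone_param C e1 e2 R O0) cone_dom (\<lambda>x. f x / infdist x (axis3 C e1 e2))
                  + surface_avg (cone_param C e1 e2 R O1) cone_dom (\<lambda>x. f x / infdist x (axis3 C e1 e2)))"
proof -
  obtain h0 h1 where O0_eq: "O0 = C + h0 *\<^sub>R cross3 e1 e2" and O1_eq: "O1 = C + h1 *\<^sub>R cross3 e1 e2"
    using O0(1) O1(1) unfolding axis3_def by blast
  interpret dicone_frame C e1 e2 R h0 h1
  proof
    show "h0 \<noteq> h1" using neq unfolding O0_eq O1_eq by auto
  qed (fact orth R)+
  have apexes: "O0 = apex h0" "O1 = apex h1" unfolding apex_def nv_def O0_eq O1_eq by simp_all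
  have dicone: "dicone (circle3 C e1 e2 R) (apex h0) (apex h1) = solid" unfolding solid_def ..
  interpret dicone_convex C e1 e2 R h0 h1 f
    by unfold_locales (fact conv[unfolded apexes dicone])
  have "f integrable_on solid" using intf unfolding apexes dicone .
  moreover have "surface_integrable (cone_param C e1 e2 R (apex h)) cone_dom (\<lambda>x. f x / infdist x (axis3 C e1 e2))"
    if "h \<in> {h0, h1}" for h
    using that intg unfolding apexes by auto
  ultimately show ?thesis unfolding apexes dicone by (rule vol_avg_solid_le_surface_avg)
qed

end
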